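(* Let $n\ge 1$ and let $C\in\mathcal{C}_n$ be an $n$-qubit Clifford unitary. Write, for $i=1,\dots,n$, $$C Z_i C^\dagger = (-1)^{f_i} P^{\vec a_i,\vec b_i},\qquad C X_i C^\dagger = (-1)^{h_i} P^{\vec c_i,\vec d_i},$$ with $\vec a_i,\vec b_i,\vec c_i,\vec d_i\in\{0,1\}^n$ and $f_i,h_i\in\{0,1\}$, and let $$S=\begin{pmatrix} A & C'\\ B & D\end{pmatrix}\in\mathbb{F}_2^{2n\times 2n},$$ where $A,B,C',D\in\mathbb{F}_2^{n\times n}$ have $i$-th columns $\vec a_i,\vec b_i,\vec c_i,\vec d_i$ respectively ($S$ is the symplectic representation of the Pauli-sign-free part $\widetilde C$ of $C$, i.e. of the element of $\mathcal{C}_n/\mathcal{P}_n$ determined by $C$). Run the Twin-$C$ circuit on input bit strings $\vec i,\vec j\in\{0,1\}^n$, and let $\vec J=(\vec i,\vec j)\in\mathbb{F}_2^{2n}$ (column vector obtained by concatenation). Then the measurement output $\vec K=(\vec k,\vec \ell)\in\mathbb{F}_2^{2n}$ satisfies $$\vec K = S\vec J + \vec F_0 \pmod 2,$$ where $\vec F_0\in\{0,1\}^{2n}$ depends on $S$ but not on $\vec J$.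
   Context: Single-qubit Paulis: $X=\begin{pmatrix}0&1\\1&0\end{pmatrix}$, $Y=\begin{pmatrix}0&-i\\i&0\end{pmatrix}$, $Z=\begin{pmatrix}1&0\\0&-1\end{pmatrix}$; $X_j,Z_j$ act on qubit $j$. Labeling: $P^{00}=I$, $P^{01}=X$, $P^{10}=Z$, $P^{11}=Y$, and for $\vec a,\vec b\in\{0,1\}^n$, $P^{\vec a,\vec b}=P^{a_1b_1}\otimes\cdots\otimes P^{a_nb_n}$; equivalently $P^{\vec a,\vec b}=(-i)^{\vec a\cdot\vec b}\prod_{i} Z_i^{a_i}X_i^{b_i}$. The Pauli group is $\mathcal{P}_n=\{i^kP^{\vec a,\vec b}\}$ and the Clifford group is $\mathcal{C}_n=\{U\in U(2^n): U\mathcal{P}_nU^\dagger\subseteq\mathcal{P}_n\}$. Twin-$C$ circuit: two registers $\mathcal{A},\mathcal{B}$ of $n$ qubits each are prepared in the computational basis state $|\vec i\rangle_{\mathcal{A}}|\vec j\rangle_{\mathcal{B}}$; apply $H^{\otimes n}$ to $\mathcal{A}$; apply CNOTs from qubit $r$ of $\mathcal{A}$ (control) to qubit $r$ of $\mathcal{B}$ (target) for each $r=1,\dots,n$; apply $C$ to $\mathcal{A}$ and $C$ to $\mathcal{B}$; apply the same transversal CNOTs again; apply $H^{\otimes n}$ to $\mathcal{A}$; measure both registers in the computational basis, obtaining $\vec k$ on $\mathcal{A}$ and $\vec\ell$ on $\mathcal{B}$. (The last three steps constitute a Bell-basis measurement.) *)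

theory Defs
  imports Complex_Main "Jordan_Normal_Form.Matrix"
begin

text \<open>An N-qubit computational basis state |x_0 ... x_(N-1)> is indexed by the natural
  number x < 2^N whose binary expansion is x_0 x_1 ... x_(N-1), qubit 0 being the
  most significant bit (so the first tensor factor is qubit 0).  Qubits are 0-indexed
  here (paper qubit r corresponds to index r-1).\<close>

definition qbit :: "nat \<Rightarrow> nat \<Rightarrow> nat \<Rightarrow> bool" where
  "qbit N x r = odd (x div 2 ^ (N - 1 - r))"

definition tensor_ops :: "nat \<Rightarrow> (nat \<Rightarrow> complex mat) \<Rightarrow> complex mat" where
  "tensor_ops N ops = mat (2 ^ N) (2 ^ N)
     (\<lambda>(y, x). \<Prod>r<N. ops r $$ (of_bool (qbit N y r), of_bool (qbit N x r)))"

definition dagger :: "complex mat \<Rightarrow> complex mat" where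
  "dagger A = mat (dim_col A) (dim_row A) (\<lambda>(i, j). cnj (A $$ (j, i)))"

definition unitary_mat :: "nat \<Rightarrow> complex mat \<Rightarrow> bool" where
  "unitary_mat d U \<longleftrightarrow> U \<in> carrier_mat d d \<and> U * dagger U = 1\<^sub>m d"

definition I2 :: "complex mat" where "I2 = mat_of_rows_list 2 [[1, 0], [0, 1]]"
definition X2 :: "complex mat" where "X2 = mat_of_rows_list 2 [[0, 1], [1, 0]]"
definition Y2 :: "complex mat" where "Y2 = mat_of_rows_list 2 [[0, -\<i>], [\<i>, 0]]"
definition Z2 :: "complex mat" where "Z2 = mat_of_rows_list 2 [[1, 0], [0, -1]]"
definition H2 :: "complex mat" where
  "H2 = mat_of_rows_list 2 [[1 / sqrt 2, 1 / sqrt 2], [1 / sqrt 2, - 1 / sqrt 2]]"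

definition P1 :: "bool \<Rightarrow> bool \<Rightarrow> complex mat" where
  "P1 a b = (if a then (if b then Y2 else Z2) else (if b then X2 else I2))"

text \<open>n-qubit Pauli P^{a,b}; vectors in F_2^n are functions nat => bool (entries r < n used).\<close>
definition pauli :: "nat \<Rightarrow> (nat \<Rightarrow> bool) \<Rightarrow> (nat \<Rightarrow> bool) \<Rightarrow> complex mat" where
  "pauli n a b = tensor_ops n (\<lambda>r. P1 (a r) (b r))"

definition Xop :: "nat \<Rightarrow> nat \<Rightarrow> complex mat" where
  "Xop n j = tensor_ops n (\<lambda>r. if r = j then X2 else I2)"

definition Zop :: "nat \<Rightarrow> nat \<Rightarrow> complex mat" where
  "Zop n j = tensor_ops n (\<lambda>r. if r = j then Z2 else I2)"

definition pauli_group :: "nat \<Rightarrow> complex mat set" where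
  "pauli_group n = {(\<i> ^ k) \<cdot>\<^sub>m pauli n a b | k a b. True}"

definition clifford_group :: "nat \<Rightarrow> complex mat set" where
  "clifford_group n = {U. unitary_mat (2 ^ n) U \<and>
      (\<forall>P \<in> pauli_group n. U * P * dagger U \<in> pauli_group n)}"

section \<open>The Twin-C circuit on 2n qubits (register A = qubits 0..n-1, B = qubits n..2n-1)\<close>

definition cnot :: "nat \<Rightarrow> nat \<Rightarrow> nat \<Rightarrow> complex mat" where
  "cnot N c t = mat (2 ^ N) (2 ^ N) (\<lambda>(y, x).
     of_bool (\<forall>q<N. qbit N y q = (if q = t then (qbit N x t \<noteq> qbit N x c) else qbit N x q)))"

definition transversal_cnot :: "nat \<Rightarrow> complex mat" where
  "transversal_cnot n = foldr (\<lambda>r M. cnot (2 * n) r (n + r) * M) [0..<n] (1\<^sub>m (2 ^ (2 * n)))"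

definition hadamard_A :: "nat \<Rightarrow> complex mat" where
  "hadamard_A n = tensor_ops (2 * n) (\<lambda>r. if r < n then H2 else I2)"

text \<open>C on A and C on B, i.e. C \<otimes> C (A is the more significant half).\<close>
definition twin_op :: "nat \<Rightarrow> complex mat \<Rightarrow> complex mat" where
  "twin_op n C = mat (2 ^ (2 * n)) (2 ^ (2 * n)) (\<lambda>(y, x).
     C $$ (y div 2 ^ n, x div 2 ^ n) * C $$ (y mod 2 ^ n, x mod 2 ^ n))"

definition twin_circuit :: "nat \<Rightarrow> complex mat \<Rightarrow> complex mat" where
  "twin_circuit n C = hadamard_A n * transversal_cnot n * twin_op n C
                       * transversal_cnot n * hadamard_A n"

definition twin_prob :: "nat \<Rightarrow> complex mat \<Rightarrow> nat \<Rightarrow> nat \<Rightarrow> nat \<Rightarrow> nat \<Rightarrow> real" where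
  "twin_prob n C i j k l = (cmod (twin_circuit n C $$ (k * 2 ^ n + l, i * 2 ^ n + j)))\<^sup>2"

text \<open>S = [A C'; B D] (2n x 2n), i-th columns of A,B,C',D being a i, b i, c i, d i.\<close>
definition symp_S :: "nat \<Rightarrow> (nat \<Rightarrow> nat \<Rightarrow> bool) \<Rightarrow> (nat \<Rightarrow> nat \<Rightarrow> bool) \<Rightarrow>
    (nat \<Rightarrow> nat \<Rightarrow> bool) \<Rightarrow> (nat \<Rightarrow> nat \<Rightarrow> bool) \<Rightarrow> nat \<Rightarrow> nat \<Rightarrow> bool" where
  "symp_S n a b c d r s =
     (if s < n then (if r < n then a s r else b s (r - n))
      else (if r < n then c (s - n) r else d (s - n) (r - n)))"

definition f2_mulv :: "nat \<Rightarrow> (nat \<Rightarrow> nat \<Rightarrow> bool) \<Rightarrow> (nat \<Rightarrow> bool) \<Rightarrow> nat \<Rightarrow> bool" where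
  "f2_mulv m M v r = odd (\<Sum>s<m. of_bool (M r s \<and> v s) :: nat)"

definition concat_bits :: "nat \<Rightarrow> nat \<Rightarrow> nat \<Rightarrow> nat \<Rightarrow> bool" where
  "concat_bits n x y r = (if r < n then qbit n x r else qbit n y (r - n))"

end

theory Submission
  imports Defs "Jordan_Normal_Form.Determinant"
begin

text \<open>
  Up to the factor 2^-n, the amplitude of the Twin-C circuit from |i\<rangle>|j\<rangle> to |k\<rangle>|l\<rangle> is a double
  sum G(k, l) over products of two entries of C, weighted by Walsh-Hadamard signs.  For each
  generator Z_s or X_s, i.e. each unit vector e_s of F_2^2n, the stabilizer relation
  C P(e_s) = \<plusminus>P(S e_s) C says that reindexing this sum multiplies it by a sign; hence
  G(k, l) \<noteq> 0 forces the linear equation J(\<pi> s) = q(S e_s) + \<omega>(S e_s, K), where J = (i, j),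
  K = (k, l), \<omega> is the symplectic form, q(u) the parity of the number of Y factors of P(u) and
  \<pi> swaps the two halves of the index range.  Since conjugation by C preserves commutation
  relations, S is symplectic, and these equations have the unique solution K = S J + S g with
  g(s) = q(S e_(\<pi> s)).  So at most one outcome has nonzero amplitude, and as C is unitary,
  \<Sum>|G(k, l)|^2 = 4^n by Parseval's identity for the Walsh-Hadamard transform: that outcome
  occurs with certainty.
\<close>

section \<open>Bit strings\<close>

definition nat_of_bits :: "nat \<Rightarrow> (nat \<Rightarrow> bool) \<Rightarrow> nat" where
  "nat_of_bits n v = horner_sum of_bool 2 (map (\<lambda>p. v (n - 1 - p)) [0..<n])"

lemma nat_of_bits_less: "nat_of_bits n v < 2 ^ n"
  using horner_sum_bound[of "map (\<lambda>p. v (n - 1 - p)) [0..<n]"] by (simp add: nat_of_bits_def)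

lemma qbit_iff_bit: "qbit N x r \<longleftrightarrow> bit x (N - 1 - r)"
  by (simp add: qbit_def bit_iff_odd)

lemma qbit_nat_of_bits: "r < n \<Longrightarrow> qbit n (nat_of_bits n v) r = v r"
  by (simp add: qbit_iff_bit nat_of_bits_def bit_horner_sum_bit_iff)

lemma qbit_eqI:
  assumes "x < 2 ^ n" "y < 2 ^ n" "\<And>r. r < n \<Longrightarrow> qbit n x r = qbit n y r"
  shows "x = y"
proof -
  have "bit x p = bit y p" for p
  proof (cases "p < n")
    case True
    then show ?thesis
      using assms(3)[of "n - 1 - p"] by (simp add: qbit_iff_bit)
  next
    case False
    then show ?thesis
      using assms(1,2) by (metis bit_take_bit_iff take_bit_nat_eq_self_iff)
  qed
  then show ?thesis by (simp add: bit_eq_iff)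
qed

lemma nat_of_bits_qbit: "x < 2 ^ n \<Longrightarrow> nat_of_bits n (qbit n x) = x"
  by (rule qbit_eqI[where n = n]) (auto simp: nat_of_bits_less qbit_nat_of_bits)

lemma eq_nat_of_bits_iff: "y < 2 ^ n \<Longrightarrow> (\<forall>r<n. qbit n y r = v r) \<longleftrightarrow> y = nat_of_bits n v"
  by (auto simp: qbit_nat_of_bits intro: qbit_eqI nat_of_bits_less)

lemma nat_of_bits_cong: "(\<And>r. r < n \<Longrightarrow> v r = w r) \<Longrightarrow> nat_of_bits n v = nat_of_bits n w"
  by (rule qbit_eqI[where n = n]) (auto simp: nat_of_bits_less qbit_nat_of_bits)

definition xor_bits :: "nat \<Rightarrow> nat \<Rightarrow> (nat \<Rightarrow> bool) \<Rightarrow> nat" where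
  "xor_bits n x v = nat_of_bits n (\<lambda>r. qbit n x r \<noteq> v r)"

lemma xor_bits_less [simp]: "xor_bits n x v < 2 ^ n"
  by (simp add: xor_bits_def nat_of_bits_less)

lemma qbit_xor_bits [simp]: "r < n \<Longrightarrow> qbit n (xor_bits n x v) r = (qbit n x r \<noteq> v r)"
  by (simp add: xor_bits_def qbit_nat_of_bits)

lemma xor_bits_xor_bits [simp]: "x < 2 ^ n \<Longrightarrow> xor_bits n (xor_bits n x v) v = x"
  by (rule qbit_eqI[where n = n]) auto

lemma xor_bits_commute: "xor_bits n (xor_bits n x v) w = xor_bits n (xor_bits n x w) v"
  by (rule qbit_eqI[where n = n]) auto

lemma xor_bits_qbit_commute: "xor_bits n x (qbit n y) = xor_bits n y (qbit n x)"
  by (rule qbit_eqI[where n = n]) auto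

lemma xor_bits_eq_iff:
  "x < 2 ^ n \<Longrightarrow> y < 2 ^ n \<Longrightarrow> y = xor_bits n x v \<longleftrightarrow> x = xor_bits n y v"
  by auto

lemma xor_bits_inject:
  "x < 2 ^ n \<Longrightarrow> y < 2 ^ n \<Longrightarrow> xor_bits n x v = xor_bits n y v \<longleftrightarrow> x = y"
  by (metis xor_bits_xor_bits)

lemma xor_bits_eq_xor_bits_swap:
  "xor_bits n y b = xor_bits n x b' \<longleftrightarrow> xor_bits n y b' = xor_bits n x b"
proof -
  have iff: "xor_bits n y b = xor_bits n x b' \<longleftrightarrow> (\<forall>r<n. (qbit n y r \<noteq> b r) = (qbit n x r \<noteq> b' r))"
    for b b'
  proof
    assume "xor_bits n y b = xor_bits n x b'"
    then show "\<forall>r<n. (qbit n y r \<noteq> b r) = (qbit n x r \<noteq> b' r)"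
      by (metis qbit_xor_bits)
  qed (intro qbit_eqI[where n = n]; simp)
  show ?thesis
    unfolding iff by (intro all_cong imp_cong refl) blast
qed

lemma sum_xor_bits_reindex:
  "(\<Sum>x<2 ^ n. F (xor_bits n x v)) = (\<Sum>x<(2::nat) ^ n. (F x :: 'a::comm_monoid_add))"
  by (rule sum.reindex_bij_witness[where i = "\<lambda>x. xor_bits n x v" and j = "\<lambda>x. xor_bits n x v"])
    auto

definition parity_sign :: "bool \<Rightarrow> complex" where
  "parity_sign p = (if p then -1 else 1)"

lemma parity_sign_simps [simp]:
  "parity_sign True = -1" "parity_sign False = 1"
  "parity_sign p * parity_sign p = 1" "parity_sign p * (parity_sign p * z) = z"
  "parity_sign p \<noteq> 0" "cnj (parity_sign p) = parity_sign p"
  by (simp_all add: parity_sign_def)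

lemma parity_sign_not: "parity_sign (\<not> p) = - parity_sign p"
  by (simp add: parity_sign_def)

lemma parity_sign_xor: "parity_sign (p \<noteq> q) = parity_sign p * parity_sign q"
  by (simp add: parity_sign_def)

lemma mult_parity_sign_cancel: "z \<noteq> 0 \<Longrightarrow> z * parity_sign p = z * parity_sign q \<Longrightarrow> p = q"
  by (simp add: parity_sign_def split: if_splits)

text \<open>Elements of \<open>\<F>\<^sub>2\<close> are booleans, with addition \<open>\<noteq>\<close>.\<close>

fun f2_dot :: "nat \<Rightarrow> (nat \<Rightarrow> bool) \<Rightarrow> (nat \<Rightarrow> bool) \<Rightarrow> bool" where
  "f2_dot 0 u v = False"
| "f2_dot (Suc m) u v = (f2_dot m u v \<noteq> (u m \<and> v m))"

lemma f2_dot_cong: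
  "(\<And>r. r < m \<Longrightarrow> u r = u' r) \<Longrightarrow> (\<And>r. r < m \<Longrightarrow> v r = v' r) \<Longrightarrow> f2_dot m u v = f2_dot m u' v'"
  by (induction m) auto

lemma f2_dot_commute: "f2_dot m u v = f2_dot m v u"
  by (induction m) auto

lemma f2_dot_xor_left: "f2_dot m (\<lambda>r. u r \<noteq> w r) v = (f2_dot m u v \<noteq> f2_dot m w v)"
  by (induction m) auto

lemma f2_dot_xor_right: "f2_dot m u (\<lambda>r. v r \<noteq> w r) = (f2_dot m u v \<noteq> f2_dot m u w)"
  by (induction m) auto

lemma f2_dot_zero [simp]: "f2_dot m (\<lambda>_. False) v = False" "f2_dot m u (\<lambda>_. False) = False"
  by (induction m) auto

lemma f2_dot_unit_left: "s < m \<Longrightarrow> f2_dot m (\<lambda>r. r = s) v = v s"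
proof (induction m)
  case (Suc m)
  have "f2_dot m' (\<lambda>r. r = s) v = False" if "m' \<le> s" for m'
    using that by (induction m') auto
  with Suc show ?case by (cases "s = m") auto
qed simp

lemma f2_dot_unit_right: "s < m \<Longrightarrow> f2_dot m v (\<lambda>r. r = s) = v s"
  using f2_dot_unit_left f2_dot_commute by metis

lemma parity_sign_f2_dot: "parity_sign (f2_dot m u v) = (\<Prod>r<m. parity_sign (u r \<and> v r))"
  by (induction m) (auto simp: parity_sign_def)

lemma f2_dot_f2_dot_swap:
  "f2_dot m u (\<lambda>q. f2_dot m' (M q) v) = f2_dot m' (\<lambda>t. f2_dot m u (\<lambda>q. M q t)) v"
proof (induction m)
  case (Suc m)
  have "f2_dot m' (\<lambda>t. f2_dot (Suc m) u (\<lambda>q. M q t)) v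
      = (f2_dot m' (\<lambda>t. f2_dot m u (\<lambda>q. M q t)) v \<noteq> f2_dot m' (\<lambda>t. u m \<and> M m t) v)"
    by (simp only: f2_dot.simps(2) f2_dot_xor_left)
  moreover have "f2_dot m' (\<lambda>t. u m \<and> M m t) v = (u m \<and> f2_dot m' (M m) v)"
    by (induction m') auto
  ultimately show ?case using Suc by simp
qed simp

lemma f2_mulv_eq_f2_dot: "f2_mulv m M v r = f2_dot m (M r) v"
  unfolding f2_mulv_def by (induction m) auto

lemma f2_dot_qbit_xor_bits:
  "f2_dot n u (qbit n (xor_bits n y v)) = (f2_dot n u (qbit n y) \<noteq> f2_dot n u v)"
proof -
  have "f2_dot n u (qbit n (xor_bits n y v)) = f2_dot n u (\<lambda>r. qbit n y r \<noteq> v r)"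
    by (rule f2_dot_cong) auto
  then show ?thesis using f2_dot_xor_right[of n u "qbit n y" v] by simp
qed

lemma parity_sign_f2_dot_xor_bits:
  "parity_sign (f2_dot n u (qbit n (xor_bits n y v)))
     = parity_sign (f2_dot n u (qbit n y)) * parity_sign (f2_dot n u v)"
  by (simp only: f2_dot_qbit_xor_bits parity_sign_xor)

section \<open>Pauli operators and the symplectic form\<close>

lemma index_mult_mat_sum:
  assumes "A \<in> carrier_mat m p" "B \<in> carrier_mat p q" "i < m" "j < q"
  shows "(A * B) $$ (i, j) = (\<Sum>k<p. A $$ (i, k) * B $$ (k, j))"
  using assms by (simp add: scalar_prod_def lessThan_atLeast0)

lemma prod_if_zero:
  "finite A \<Longrightarrow> (\<Prod>r\<in>A. if c r then f r else (0::'a::comm_semiring_1))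
     = (if \<forall>r\<in>A. c r then prod f A else 0)"
  by (induction A rule: finite_induct) auto

lemma tensor_ops_carrier [simp]: "tensor_ops N ops \<in> carrier_mat (2 ^ N) (2 ^ N)"
  by (simp add: tensor_ops_def)

lemma tensor_ops_dim [simp]:
  "dim_row (tensor_ops N ops) = 2 ^ N" "dim_col (tensor_ops N ops) = 2 ^ N"
  by (simp_all add: tensor_ops_def)

lemma tensor_ops_entry:
  "y < 2 ^ N \<Longrightarrow> x < 2 ^ N \<Longrightarrow>
     tensor_ops N ops $$ (y, x) = (\<Prod>r<N. ops r $$ (of_bool (qbit N y r), of_bool (qbit N x r)))"
  by (simp add: tensor_ops_def)

lemma tensor_ops_cong: "(\<And>r. r < N \<Longrightarrow> ops r = ops' r) \<Longrightarrow> tensor_ops N ops = tensor_ops N ops'"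
  unfolding tensor_ops_def by (intro eq_matI) auto

definition pauli_phase :: "nat \<Rightarrow> (nat \<Rightarrow> bool) \<Rightarrow> (nat \<Rightarrow> bool) \<Rightarrow> complex" where
  "pauli_phase n a b = (\<Prod>r<n. if a r \<and> b r then - \<i> else 1)"

lemma pauli_phase_square: "pauli_phase n a b * pauli_phase n a b = parity_sign (f2_dot n a b)"
  unfolding pauli_phase_def parity_sign_f2_dot prod.distrib[symmetric]
  by (rule prod.cong) (auto simp: parity_sign_def)

lemma pauli_phase_square_mult:
  "pauli_phase n a b * (pauli_phase n a b * z) = parity_sign (f2_dot n a b) * z"
  by (simp add: pauli_phase_square mult.assoc[symmetric])

lemma P1_entry:
  "P1 a b $$ (of_bool p, of_bool q) =
     (if p = (q \<noteq> b) then (if a \<and> b then - \<i> else 1) * parity_sign (a \<and> p) else 0)"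
  by (cases a; cases b; cases p; cases q)
    (simp_all add: P1_def X2_def Y2_def Z2_def I2_def mat_of_rows_list_def)

lemma pauli_carrier [simp]: "pauli n a b \<in> carrier_mat (2 ^ n) (2 ^ n)"
  by (simp add: pauli_def)

lemma pauli_dim [simp]: "dim_row (pauli n a b) = 2 ^ n" "dim_col (pauli n a b) = 2 ^ n"
  by (simp_all add: pauli_def)

lemma pauli_entry:
  assumes "y < 2 ^ n" "x < 2 ^ n"
  shows "pauli n a b $$ (y, x) =
           (if y = xor_bits n x b then pauli_phase n a b * parity_sign (f2_dot n a (qbit n y)) else 0)"
proof -
  have "pauli n a b $$ (y, x) = (\<Prod>r<n. if qbit n y r = (qbit n x r \<noteq> b r)
       then (if a r \<and> b r then - \<i> else 1) * parity_sign (a r \<and> qbit n y r) else 0)"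
    unfolding pauli_def using assms by (simp add: tensor_ops_entry P1_entry)
  also have "\<dots> = (if \<forall>r<n. qbit n y r = (qbit n x r \<noteq> b r) then
       (\<Prod>r<n. (if a r \<and> b r then - \<i> else 1) * parity_sign (a r \<and> qbit n y r)) else 0)"
    by (subst prod_if_zero) auto
  also have "(\<forall>r<n. qbit n y r = (qbit n x r \<noteq> b r)) \<longleftrightarrow> y = xor_bits n x b"
    using eq_nat_of_bits_iff[OF assms(1)] by (simp add: xor_bits_def)
  finally show ?thesis
    by (simp add: prod.distrib pauli_phase_def parity_sign_f2_dot)
qed

lemma pauli_mult_entry:
  assumes M: "M \<in> carrier_mat (2 ^ n) q" and "y < 2 ^ n" "x < q"
  shows "(pauli n a b * M) $$ (y, x) =
           pauli_phase n a b * parity_sign (f2_dot n a (qbit n y)) * M $$ (xor_bits n y b, x)"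
proof -
  have "(pauli n a b * M) $$ (y, x) = (\<Sum>z<2 ^ n. pauli n a b $$ (y, z) * M $$ (z, x))"
    using assms by (intro index_mult_mat_sum[OF pauli_carrier M])
  also have "\<dots> = (\<Sum>z<2 ^ n. if z = xor_bits n y b
                     then pauli_phase n a b * parity_sign (f2_dot n a (qbit n y)) * M $$ (z, x) else 0)"
    using assms by (intro sum.cong) (auto simp: pauli_entry xor_bits_eq_iff)
  finally show ?thesis by simp
qed

lemma mult_pauli_entry:
  assumes M: "M \<in> carrier_mat q (2 ^ n)" and "y < q" "x < 2 ^ n"
  shows "(M * pauli n a b) $$ (y, x) =
           M $$ (y, xor_bits n x b) * pauli_phase n a b * parity_sign (f2_dot n a (qbit n (xor_bits n x b)))"
proof -
  have "(M * pauli n a b) $$ (y, x) = (\<Sum>z<2 ^ n. M $$ (y, z) * pauli n a b $$ (z, x))"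
    using assms by (intro index_mult_mat_sum[OF M pauli_carrier])
  also have "\<dots> = (\<Sum>z<2 ^ n. if z = xor_bits n x b
       then M $$ (y, z) * (pauli_phase n a b * parity_sign (f2_dot n a (qbit n z))) else 0)"
    using assms by (intro sum.cong) (auto simp: pauli_entry)
  finally show ?thesis by (simp add: mult.assoc)
qed

lemma pauli_mult_self: "pauli n a b * pauli n a b = 1\<^sub>m (2 ^ n)"
proof (rule eq_matI)
  fix y x assume "y < dim_row (1\<^sub>m (2 ^ n))" "x < dim_col (1\<^sub>m (2 ^ n))"
  then have y: "y < 2 ^ n" and x: "x < 2 ^ n" by simp_all
  have "(pauli n a b * pauli n a b) $$ (y, x)
      = pauli_phase n a b * parity_sign (f2_dot n a (qbit n y)) * pauli n a b $$ (xor_bits n y b, x)"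
    using y x by (rule pauli_mult_entry[OF pauli_carrier])
  also have "\<dots> = of_bool (y = x)"
    using x y
    by (auto simp: pauli_entry xor_bits_inject parity_sign_f2_dot_xor_bits
        pauli_phase_square pauli_phase_square_mult mult_ac)
  finally show "(pauli n a b * pauli n a b) $$ (y, x) = 1\<^sub>m (2 ^ n) $$ (y, x)"
    using x y by simp
qed auto

lemma pauli_mult_pauli_entry:
  assumes "y < 2 ^ n" "x < 2 ^ n"
  shows "(pauli n a b * pauli n a' b') $$ (y, x) =
    (if xor_bits n y b = xor_bits n x b'
     then pauli_phase n a b * pauli_phase n a' b' * parity_sign (f2_dot n a (qbit n y))
          * parity_sign (f2_dot n a' (qbit n y)) * parity_sign (f2_dot n a' b)
     else 0)"
proof -
  have "(pauli n a b * pauli n a' b') $$ (y, x)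
      = pauli_phase n a b * parity_sign (f2_dot n a (qbit n y)) * pauli n a' b' $$ (xor_bits n y b, x)"
    using assms by (rule pauli_mult_entry[OF pauli_carrier])
  also have "pauli n a' b' $$ (xor_bits n y b, x) = (if xor_bits n y b = xor_bits n x b'
      then pauli_phase n a' b' * (parity_sign (f2_dot n a' (qbit n y)) * parity_sign (f2_dot n a' b)) else 0)"
    using assms(2) by (simp only: pauli_entry xor_bits_less parity_sign_f2_dot_xor_bits)
  finally show ?thesis by (simp add: mult_ac)
qed

lemma pauli_mult_commute:
  "pauli n a b * pauli n a' b'
     = parity_sign (f2_dot n a b' \<noteq> f2_dot n b a') \<cdot>\<^sub>m (pauli n a' b' * pauli n a b)"
proof (rule eq_matI)
  fix y x
  assume "y < dim_row (parity_sign (f2_dot n a b' \<noteq> f2_dot n b a') \<cdot>\<^sub>m (pauli n a' b' * pauli n a b))"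
    and "x < dim_col (parity_sign (f2_dot n a b' \<noteq> f2_dot n b a') \<cdot>\<^sub>m (pauli n a' b' * pauli n a b))"
  then have y: "y < 2 ^ n" and x: "x < 2 ^ n" by simp_all
  have smult: "(\<sigma> \<cdot>\<^sub>m (pauli n a' b' * pauli n a b)) $$ (y, x) = \<sigma> * (pauli n a' b' * pauli n a b) $$ (y, x)"
    for \<sigma> using x y by simp
  show "(pauli n a b * pauli n a' b') $$ (y, x)
      = (parity_sign (f2_dot n a b' \<noteq> f2_dot n b a') \<cdot>\<^sub>m (pauli n a' b' * pauli n a b)) $$ (y, x)"
    unfolding smult pauli_mult_pauli_entry[OF y x]
    by (simp add: xor_bits_eq_xor_bits_swap f2_dot_commute[of n b a'] parity_sign_def)
qed auto

lemma Zop_eq_pauli: "Zop n s = pauli n (\<lambda>r. r = s) (\<lambda>_. False)"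
  unfolding Zop_def pauli_def by (rule arg_cong[where f = "tensor_ops n"]) (auto simp: P1_def)

lemma Xop_eq_pauli: "Xop n s = pauli n (\<lambda>_. False) (\<lambda>r. r = s)"
  unfolding Xop_def pauli_def by (rule arg_cong[where f = "tensor_ops n"]) (auto simp: P1_def)

lemma pauli_cong:
  "(\<And>r. r < n \<Longrightarrow> a r = a' r) \<Longrightarrow> (\<And>r. r < n \<Longrightarrow> b r = b' r) \<Longrightarrow> pauli n a b = pauli n a' b'"
  unfolding pauli_def by (rule tensor_ops_cong) simp

text \<open>A vector u of \<open>\<F>\<^sub>2\<^sup>2\<^sup>n\<close> labels the Pauli operator with Z-part its first half and
  X-part its second half.\<close>

definition pauli_vec :: "nat \<Rightarrow> (nat \<Rightarrow> bool) \<Rightarrow> complex mat" where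
  "pauli_vec n u = pauli n u (\<lambda>q. u (n + q))"

definition symp_form :: "nat \<Rightarrow> (nat \<Rightarrow> bool) \<Rightarrow> (nat \<Rightarrow> bool) \<Rightarrow> bool" where
  "symp_form n u v = (f2_dot n u (\<lambda>q. v (n + q)) \<noteq> f2_dot n (\<lambda>q. u (n + q)) v)"

text \<open>The parity of the number of Y factors of pauli_vec n u.\<close>

definition symp_quad :: "nat \<Rightarrow> (nat \<Rightarrow> bool) \<Rightarrow> bool" where
  "symp_quad n u = f2_dot n u (\<lambda>q. u (n + q))"

lemma pauli_vec_carrier [simp]: "pauli_vec n u \<in> carrier_mat (2 ^ n) (2 ^ n)"
  by (simp add: pauli_vec_def)

lemma pauli_vec_mult_carrier [simp]: "pauli_vec n u * pauli_vec n v \<in> carrier_mat (2 ^ n) (2 ^ n)"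
  by (rule mult_carrier_mat[OF pauli_vec_carrier pauli_vec_carrier])

lemma pauli_vec_mult_commute:
  "pauli_vec n u * pauli_vec n v = parity_sign (symp_form n u v) \<cdot>\<^sub>m (pauli_vec n v * pauli_vec n u)"
  unfolding pauli_vec_def symp_form_def by (rule pauli_mult_commute)

lemma pauli_vec_mult_self: "pauli_vec n u * pauli_vec n u = 1\<^sub>m (2 ^ n)"
  unfolding pauli_vec_def by (rule pauli_mult_self)

lemma smult_mat_cancel:
  fixes A B :: "'a::comm_ring_1 mat"
  assumes "s \<cdot>\<^sub>m A = t \<cdot>\<^sub>m A"
    and "A \<in> carrier_mat N N" "B \<in> carrier_mat N N" "A * B = 1\<^sub>m N" "0 < N"
  shows "s = t"
proof -
  have "s \<cdot>\<^sub>m 1\<^sub>m N = t \<cdot>\<^sub>m 1\<^sub>m N"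
    using assms by (metis mult_smult_assoc_mat)
  then show ?thesis
    using assms(5) by (metis index_one_mat(1) index_smult_mat(1) index_one_mat(2,3) mult.right_neutral)
qed

lemma smult_mult_smult_mat:
  fixes A B :: "'a::comm_ring_1 mat"
  assumes "A \<in> carrier_mat N N" "B \<in> carrier_mat N N"
  shows "(s \<cdot>\<^sub>m A) * (t \<cdot>\<^sub>m B) = (s * t) \<cdot>\<^sub>m (A * B)"
  using assms by (intro eq_matI) (auto simp: mult_smult_assoc_mat mult_smult_distrib)

lemma smult_smult_mat: "s \<cdot>\<^sub>m (t \<cdot>\<^sub>m A) = (s * t :: 'a::comm_ring_1) \<cdot>\<^sub>m A"
  by (intro eq_matI) simp_all

lemma pauli_vec_mult_inverse:
  "(pauli_vec n v * pauli_vec n u) * (pauli_vec n u * pauli_vec n v) = 1\<^sub>m (2 ^ n)"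
proof -
  have P: "pauli_vec n u \<in> carrier_mat (2 ^ n) (2 ^ n)" and Q: "pauli_vec n v \<in> carrier_mat (2 ^ n) (2 ^ n)"
    by simp_all
  have "(pauli_vec n v * pauli_vec n u) * (pauli_vec n u * pauli_vec n v)
      = (pauli_vec n v * (pauli_vec n u * pauli_vec n u)) * pauli_vec n v"
    by (simp only: assoc_mult_mat[OF mult_carrier_mat[OF Q P] P Q, symmetric] assoc_mult_mat[OF Q P P])
  then show ?thesis using Q by (simp add: pauli_vec_mult_self)
qed

lemma unitary_conj_mult:
  assumes C: "C \<in> carrier_mat N N" and CC: "dagger C * C = 1\<^sub>m N"
    and X: "X \<in> carrier_mat N N" and Y: "Y \<in> carrier_mat N N"
  shows "C * (X * Y) * dagger C = (C * X * dagger C) * (C * Y * dagger C)"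
proof -
  have D: "dagger C \<in> carrier_mat N N" using C by (simp add: dagger_def)
  have "(C * X * dagger C) * (C * Y * dagger C) = C * X * (dagger C * C) * Y * dagger C"
    using C D X Y by (simp add: assoc_mult_mat[of _ N N _ N _ N])
  then show ?thesis
    using C D X Y CC by (simp add: assoc_mult_mat[of _ N N _ N _ N])
qed

lemma unitary_conj_smult:
  assumes "C \<in> carrier_mat N N" "X \<in> carrier_mat N N"
  shows "C * (s \<cdot>\<^sub>m X) * dagger C = s \<cdot>\<^sub>m (C * X * dagger C)"
proof -
  have "dagger C \<in> carrier_mat N N" using assms(1) by (simp add: dagger_def)
  then show ?thesis
    using assms by (simp add: mult_smult_distrib[OF assms] mult_smult_assoc_mat[OF mult_carrier_mat[OF assms]])
qed

lemma unitary_conj_symp_form: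
  assumes C: "C \<in> carrier_mat (2 ^ n) (2 ^ n)" and CC: "dagger C * C = 1\<^sub>m (2 ^ n)"
    and u: "C * pauli_vec n u * dagger C = \<sigma> \<cdot>\<^sub>m pauli_vec n u'"
    and v: "C * pauli_vec n v * dagger C = \<tau> \<cdot>\<^sub>m pauli_vec n v'"
    and "\<sigma> * \<tau> \<noteq> 0"
  shows "symp_form n u' v' = symp_form n u v"
proof -
  let ?N = "2 ^ n :: nat"
  let ?P = "pauli_vec n u" and ?Q = "pauli_vec n v" and ?P' = "pauli_vec n u'" and ?Q' = "pauli_vec n v'"
  have "(\<sigma> * \<tau> * parity_sign (symp_form n u' v')) \<cdot>\<^sub>m (?Q' * ?P') = (\<sigma> * \<tau>) \<cdot>\<^sub>m (?P' * ?Q')"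
    by (simp add: pauli_vec_mult_commute[of n u' v'] smult_smult_mat mult_ac)
  also have "\<dots> = C * (?P * ?Q) * dagger C"
    by (simp add: unitary_conj_mult[OF C CC] u v smult_mult_smult_mat[where N = ?N])
  also have "\<dots> = parity_sign (symp_form n u v) \<cdot>\<^sub>m (C * (?Q * ?P) * dagger C)"
    by (simp only: pauli_vec_mult_commute[of n u v] unitary_conj_smult[OF C pauli_vec_mult_carrier])
  also have "\<dots> = (\<sigma> * \<tau> * parity_sign (symp_form n u v)) \<cdot>\<^sub>m (?Q' * ?P')"
    by (simp add: unitary_conj_mult[OF C CC] u v smult_mult_smult_mat[where N = ?N] smult_smult_mat mult_ac)
  finally have "\<sigma> * \<tau> * parity_sign (symp_form n u' v') = \<sigma> * \<tau> * parity_sign (symp_form n u v)"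
    by (rule smult_mat_cancel[where B = "?P' * ?Q'" and N = ?N]) (simp_all add: pauli_vec_mult_inverse)
  then show ?thesis
    by (rule mult_parity_sign_cancel[OF \<open>\<sigma> * \<tau> \<noteq> 0\<close>])
qed

lemma conj_eq_smult_imp_mult_eq:
  assumes C: "C \<in> carrier_mat N N" and CC: "dagger C * C = 1\<^sub>m N"
    and P: "P \<in> carrier_mat N N" and Q: "Q \<in> carrier_mat N N"
    and "C * P * dagger C = \<sigma> \<cdot>\<^sub>m Q"
  shows "C * P = \<sigma> \<cdot>\<^sub>m (Q * C)"
proof -
  have D: "dagger C \<in> carrier_mat N N" using C by (simp add: dagger_def)
  have "C * P = C * P * (dagger C * C)" using C P by (simp add: CC)
  also have "\<dots> = (C * P * dagger C) * C"
    by (rule assoc_mult_mat[OF mult_carrier_mat[OF C P] D C, symmetric])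
  also have "\<dots> = \<sigma> \<cdot>\<^sub>m (Q * C)" using assms Q by (simp add: mult_smult_assoc_mat)
  finally show ?thesis .
qed

section \<open>Symplectic matrices over \<open>\<F>\<^sub>2\<close>\<close>

definition swap_halves :: "nat \<Rightarrow> nat \<Rightarrow> nat" where
  "swap_halves n t = (if t < n then n + t else t - n)"

lemma swap_halves_less: "t < 2 * n \<Longrightarrow> swap_halves n t < 2 * n"
  by (auto simp: swap_halves_def)

lemma swap_halves_swap_halves: "t < 2 * n \<Longrightarrow> swap_halves n (swap_halves n t) = t"
  by (auto simp: swap_halves_def)

definition symplectic :: "nat \<Rightarrow> (nat \<Rightarrow> nat \<Rightarrow> bool) \<Rightarrow> bool" where
  "symplectic n M \<longleftrightarrow>
     (\<forall>s<2 * n. \<forall>t<2 * n. symp_form n (\<lambda>r. M r s) (\<lambda>r. M r t) = (t = swap_halves n s))"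

lemma symp_form_cong: "(\<And>r. r < 2 * n \<Longrightarrow> v r = v' r) \<Longrightarrow> symp_form n u v = symp_form n u v'"
  unfolding symp_form_def by (intro arg_cong2[where f = "(\<noteq>)"] f2_dot_cong) auto

lemma symp_form_unit_left: "s < 2 * n \<Longrightarrow> symp_form n (\<lambda>r. r = s) v = v (swap_halves n s)"
proof (cases "s < n")
  case True
  have "f2_dot n (\<lambda>q. n + q = s) v = f2_dot n (\<lambda>_. False) v"
    using True by (intro f2_dot_cong) auto
  then show ?thesis
    using True by (simp add: symp_form_def swap_halves_def f2_dot_unit_left)
next
  case False
  assume "s < 2 * n"
  have "f2_dot n (\<lambda>r. r = s) (\<lambda>q. v (n + q)) = f2_dot n (\<lambda>_. False) (\<lambda>q. v (n + q))"
    using False by (intro f2_dot_cong) auto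
  moreover have "f2_dot n (\<lambda>q. n + q = s) v = f2_dot n (\<lambda>q. q = s - n) v"
    using False by (intro f2_dot_cong) auto
  ultimately show ?thesis
    using False \<open>s < 2 * n\<close> by (simp add: symp_form_def swap_halves_def f2_dot_unit_left)
qed

lemma symp_quad_unit: "symp_quad n (\<lambda>r. r = s) = False"
proof (cases "s < n")
  case True
  then have "f2_dot n (\<lambda>r. r = s) (\<lambda>q. n + q = s) = f2_dot n (\<lambda>r. r = s) (\<lambda>_. False)"
    by (intro f2_dot_cong) auto
  then show ?thesis by (simp add: symp_quad_def)
next
  case False
  then have "f2_dot n (\<lambda>r. r = s) (\<lambda>q. n + q = s) = f2_dot n (\<lambda>_. False) (\<lambda>q. n + q = s)"
    by (intro f2_dot_cong) auto
  then show ?thesis by (simp add: symp_quad_def)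
qed

lemma symp_form_concat_bits:
  "symp_form n u (concat_bits n x y) = (f2_dot n u (qbit n y) \<noteq> f2_dot n (qbit n x) (\<lambda>q. u (n + q)))"
proof -
  have "f2_dot n (\<lambda>q. u (n + q)) (concat_bits n x y) = f2_dot n (qbit n x) (\<lambda>q. u (n + q))"
    by (subst f2_dot_commute) (rule f2_dot_cong, simp_all add: concat_bits_def)
  then show ?thesis by (simp add: symp_form_def concat_bits_def)
qed

lemma symp_form_f2_mulv: "symp_form n u (f2_mulv N M v) = f2_dot N (\<lambda>t. symp_form n u (\<lambda>q. M q t)) v"
proof -
  have "f2_mulv N M v = (\<lambda>q. f2_dot N (M q) v)"
    by (rule ext) (rule f2_mulv_eq_f2_dot)
  then have "symp_form n u (f2_mulv N M v)
      = (f2_dot N (\<lambda>t. f2_dot n u (\<lambda>q. M (n + q) t)) v \<noteq> f2_dot N (\<lambda>t. f2_dot n (\<lambda>q. u (n + q)) (\<lambda>q. M q t)) v)"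
    by (simp only: symp_form_def f2_dot_f2_dot_swap)
  also have "\<dots> = f2_dot N (\<lambda>t. symp_form n u (\<lambda>q. M q t)) v"
    by (simp only: symp_form_def f2_dot_xor_left)
  finally show ?thesis .
qed

lemma f2_mulv_cong: "(\<And>s. s < N \<Longrightarrow> v s = v' s) \<Longrightarrow> f2_mulv N M v t = f2_mulv N M v' t"
  unfolding f2_mulv_eq_f2_dot by (rule f2_dot_cong) auto

lemma f2_mulv_xor: "f2_mulv N M (\<lambda>s. v s \<noteq> w s) t = (f2_mulv N M v t \<noteq> f2_mulv N M w t)"
  unfolding f2_mulv_eq_f2_dot by (rule f2_dot_xor_right)

lemma symplectic_left_inverse:
  assumes "symplectic n M" "t < 2 * n"
  shows "symp_form n (\<lambda>r. M r (swap_halves n t)) (f2_mulv (2 * n) M v) = v t"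
proof -
  have "symp_form n (\<lambda>r. M r (swap_halves n t)) (f2_mulv (2 * n) M v)
      = f2_dot (2 * n) (\<lambda>s. s = t) v"
    unfolding symp_form_f2_mulv using assms
    by (intro f2_dot_cong) (auto simp: symplectic_def swap_halves_less swap_halves_swap_halves)
  then show ?thesis using assms(2) by (simp add: f2_dot_unit_left)
qed

lemma finite_left_inverse_imp_right_inverse:
  assumes "finite A" "f ` A \<subseteq> A" "\<And>x. x \<in> A \<Longrightarrow> g (f x) = x" "x \<in> A"
  shows "f (g x) = x"
proof -
  have "inj_on f A" by (metis assms(3) inj_onI)
  then have "f ` A = A" by (rule endo_inj_surj[OF assms(1,2)])
  then obtain w where "w \<in> A" "x = f w" using assms(4) by blast
  then show ?thesis using assms(3) by simp
qed

lemma finite_bounded_support: "finite {v :: nat \<Rightarrow> bool. \<forall>s. v s \<longrightarrow> s < N}"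
proof -
  have "{v. \<forall>s. v s \<longrightarrow> s < N} \<subseteq> (\<lambda>B s. s \<in> B) ` Pow {..<N}"
  proof
    fix v :: "nat \<Rightarrow> bool" assume "v \<in> {v. \<forall>s. v s \<longrightarrow> s < N}"
    then have "v = (\<lambda>s. s \<in> {s. v s})" "{s. v s} \<in> Pow {..<N}" by auto
    then show "v \<in> (\<lambda>B s. s \<in> B) ` Pow {..<N}" by blast
  qed
  then show ?thesis by (rule finite_subset) simp
qed

text \<open>The left inverse of M given by symplecticity is also a right inverse, because it is
  one on the finite set of vectors supported below 2n.\<close>

lemma symplectic_right_inverse:
  assumes "symplectic n M" "t < 2 * n"
  shows "f2_mulv (2 * n) M (\<lambda>s. symp_form n (\<lambda>r. M r (swap_halves n s)) K) t = K t"
proof -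
  let ?N = "2 * n"
  define trunc where "trunc v = (\<lambda>s. s < ?N \<and> v s)" for v :: "nat \<Rightarrow> bool"
  define \<phi> where "\<phi> K = (\<lambda>s. symp_form n (\<lambda>r. M r (swap_halves n s)) K)" for K
  let ?A = "{v. \<forall>s. v s \<longrightarrow> s < ?N}"
  have "finite ?A" by (rule finite_bounded_support)
  moreover have "(\<lambda>v. trunc (f2_mulv ?N M v)) ` ?A \<subseteq> ?A" by (auto simp: trunc_def)
  moreover have "trunc (\<phi> (trunc (f2_mulv ?N M v))) = v" if "v \<in> ?A" for v
  proof
    fix s
    have "\<phi> (trunc (f2_mulv ?N M v)) s = \<phi> (f2_mulv ?N M v) s" if "s < ?N"
      unfolding \<phi>_def by (rule symp_form_cong) (simp add: trunc_def)
    then show "trunc (\<phi> (trunc (f2_mulv ?N M v))) s = v s"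
      using \<open>v \<in> ?A\<close> assms(1) by (auto simp: trunc_def \<phi>_def symplectic_left_inverse)
  qed
  moreover have "trunc K \<in> ?A" by (simp add: trunc_def)
  ultimately have "trunc (f2_mulv ?N M (trunc (\<phi> (trunc K)))) = trunc K"
    by (rule finite_left_inverse_imp_right_inverse[where g = "\<lambda>K. trunc (\<phi> K)"])
  then have "f2_mulv ?N M (trunc (\<phi> (trunc K))) t = K t"
    using assms(2) by (metis trunc_def)
  moreover have "f2_mulv ?N M (trunc (\<phi> (trunc K))) t = f2_mulv ?N M (\<phi> K) t"
  proof (rule f2_mulv_cong)
    fix s assume "s < ?N"
    moreover have "\<phi> (trunc K) s = \<phi> K s"
      unfolding \<phi>_def by (rule symp_form_cong) (simp add: trunc_def)
    ultimately show "trunc (\<phi> (trunc K)) s = \<phi> K s" by (simp add: trunc_def)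
  qed
  ultimately show ?thesis
    by (simp add: \<phi>_def)
qed

lemma symplectic_solve:
  assumes "symplectic n M"
    and "\<And>s. s < 2 * n \<Longrightarrow> J (swap_halves n s) = (g s \<noteq> symp_form n (\<lambda>r. M r s) K)"
    and "t < 2 * n"
  shows "K t = (f2_mulv (2 * n) M J t \<noteq> f2_mulv (2 * n) M (\<lambda>s. g (swap_halves n s)) t)"
proof -
  have "K t = f2_mulv (2 * n) M (\<lambda>s. symp_form n (\<lambda>r. M r (swap_halves n s)) K) t"
    using symplectic_right_inverse[OF assms(1,3)] by simp
  also have "\<dots> = f2_mulv (2 * n) M (\<lambda>s. J s \<noteq> g (swap_halves n s)) t"
  proof (rule f2_mulv_cong)
    fix s assume "s < 2 * n"
    then have "J s = (g (swap_halves n s) \<noteq> symp_form n (\<lambda>r. M r (swap_halves n s)) K)"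
      using assms(2)[of "swap_halves n s"] by (simp add: swap_halves_less swap_halves_swap_halves)
    then show "symp_form n (\<lambda>r. M r (swap_halves n s)) K = (J s \<noteq> g (swap_halves n s))"
      by auto
  qed
  finally show ?thesis by (simp only: f2_mulv_xor)
qed

section \<open>The Twin-C amplitude\<close>

text \<open>The amplitude of the Twin-C circuit from |i\<rangle>|j\<rangle> to |k\<rangle>|l\<rangle>, up to the factor 2^-n
  contributed by the Hadamard layers.\<close>

definition twin_amplitude :: "nat \<Rightarrow> complex mat \<Rightarrow> nat \<Rightarrow> nat \<Rightarrow> nat \<Rightarrow> nat \<Rightarrow> complex" where
  "twin_amplitude n C k l i j =
     (\<Sum>y<2 ^ n. \<Sum>x<2 ^ n. parity_sign (f2_dot n (qbit n k) (qbit n y))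
        * parity_sign (f2_dot n (qbit n i) (qbit n x))
        * C $$ (y, x) * C $$ (xor_bits n y (qbit n l), xor_bits n x (qbit n j)))"

text \<open>Reindexing x \<mapsto> x \<oplus> \<beta> and y \<mapsto> y \<oplus> b leaves the double sum unchanged, while by the entry
  relation it multiplies every term by the same sign.\<close>

lemma twin_amplitude_constraint:
  fixes C :: "complex mat"
  assumes rel: "\<And>y x. y < 2 ^ n \<Longrightarrow> x < 2 ^ n \<Longrightarrow>
      C $$ (y, xor_bits n x \<beta>) = \<kappa> * parity_sign (f2_dot n \<alpha> (qbit n (xor_bits n x \<beta>)))
        * parity_sign (f2_dot n a (qbit n y)) * C $$ (xor_bits n y b, x)"
    and \<kappa>: "\<kappa> * \<kappa> = parity_sign (f2_dot n a b) * parity_sign (f2_dot n \<alpha> \<beta>)"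
    and nonzero: "twin_amplitude n C k l i j \<noteq> 0"
  shows "((f2_dot n \<alpha> \<beta> \<noteq> f2_dot n \<alpha> (qbit n j)) \<noteq> f2_dot n (qbit n i) \<beta>)
       = ((f2_dot n a b \<noteq> f2_dot n a (qbit n l)) \<noteq> f2_dot n (qbit n k) b)"
proof -
  define T where "T y x = parity_sign (f2_dot n (qbit n k) (qbit n y))
      * parity_sign (f2_dot n (qbit n i) (qbit n x))
      * C $$ (y, x) * C $$ (xor_bits n y (qbit n l), xor_bits n x (qbit n j))" for y x
  let ?L = "parity_sign (f2_dot n \<alpha> \<beta>) * parity_sign (f2_dot n \<alpha> (qbit n j))
    * parity_sign (f2_dot n (qbit n i) \<beta>)"
  let ?R = "parity_sign (f2_dot n a b) * parity_sign (f2_dot n a (qbit n l))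
    * parity_sign (f2_dot n (qbit n k) b)"
  have \<kappa>\<kappa>: "\<kappa> * (\<kappa> * z) = parity_sign (f2_dot n a b) * (parity_sign (f2_dot n \<alpha> \<beta>) * z)" for z
    by (simp add: mult.assoc[symmetric] \<kappa>)
  have term_shift: "?L * T y (xor_bits n x \<beta>) = ?R * T (xor_bits n y b) x"
    if y: "y < 2 ^ n" and x: "x < 2 ^ n" for y x
  proof -
    have swap: "C $$ (xor_bits n y (qbit n l), xor_bits n (xor_bits n x \<beta>) (qbit n j))
        = C $$ (xor_bits n y (qbit n l), xor_bits n (xor_bits n x (qbit n j)) \<beta>)"
      by (simp only: xor_bits_commute)
    show ?thesis
      unfolding T_def swap rel[OF y x] rel[OF xor_bits_less xor_bits_less]
      by (simp add: parity_sign_f2_dot_xor_bits xor_bits_commute[of n y b] mult_ac \<kappa>\<kappa>)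
  qed
  have G: "twin_amplitude n C k l i j = (\<Sum>y<2 ^ n. \<Sum>x<2 ^ n. T y x)"
    by (simp add: twin_amplitude_def T_def)
  have "?L * twin_amplitude n C k l i j = (\<Sum>y<2 ^ n. \<Sum>x<2 ^ n. ?L * T y x)"
    by (simp add: G sum_distrib_left)
  also have "\<dots> = (\<Sum>y<2 ^ n. \<Sum>x<2 ^ n. ?L * T y (xor_bits n x \<beta>))"
    by (rule sum.cong[OF refl], rule sum_xor_bits_reindex[symmetric])
  also have "\<dots> = (\<Sum>y<2 ^ n. \<Sum>x<2 ^ n. ?R * T (xor_bits n y b) x)"
    by (intro sum.cong refl) (simp add: term_shift)
  also have "\<dots> = (\<Sum>y<2 ^ n. \<Sum>x<2 ^ n. ?R * T y x)"
    by (rule sum_xor_bits_reindex)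
  also have "\<dots> = ?R * twin_amplitude n C k l i j"
    by (simp add: G sum_distrib_left)
  finally have "?L = ?R" using nonzero by simp
  then show ?thesis by (simp add: parity_sign_def split: if_splits)
qed

lemma pauli_vec_intertwining_entry:
  assumes C: "C \<in> carrier_mat (2 ^ n) (2 ^ n)"
    and rel: "C * pauli_vec n u = \<sigma> \<cdot>\<^sub>m (pauli_vec n v * C)"
    and y: "y < 2 ^ n" and x: "x < 2 ^ n"
  shows "C $$ (y, xor_bits n x (\<lambda>q. u (n + q)))
       = (\<sigma> * pauli_phase n v (\<lambda>q. v (n + q)) * pauli_phase n u (\<lambda>q. u (n + q)) * parity_sign (symp_quad n u))
         * parity_sign (f2_dot n u (qbit n (xor_bits n x (\<lambda>q. u (n + q)))))
         * parity_sign (f2_dot n v (qbit n y)) * C $$ (xor_bits n y (\<lambda>q. v (n + q)), x)"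
proof -
  let ?\<beta> = "\<lambda>q. u (n + q)" and ?b = "\<lambda>q. v (n + q)"
  let ?\<phi> = "pauli_phase n u ?\<beta>" and ?s = "parity_sign (f2_dot n u (qbit n (xor_bits n x ?\<beta>)))"
  have "C $$ (y, xor_bits n x ?\<beta>) * ?\<phi> * ?s
      = \<sigma> * (pauli_phase n v ?b * parity_sign (f2_dot n v (qbit n y)) * C $$ (xor_bits n y ?b, x))"
  proof -
    have "(C * pauli_vec n u) $$ (y, x) = C $$ (y, xor_bits n x ?\<beta>) * ?\<phi> * ?s"
      unfolding pauli_vec_def using y x by (rule mult_pauli_entry[OF C])
    moreover have "(\<sigma> \<cdot>\<^sub>m (pauli_vec n v * C)) $$ (y, x) = \<sigma> * (pauli_vec n v * C) $$ (y, x)"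
      using C y x by (simp add: pauli_vec_def)
    moreover have "(pauli_vec n v * C) $$ (y, x)
        = pauli_phase n v ?b * parity_sign (f2_dot n v (qbit n y)) * C $$ (xor_bits n y ?b, x)"
      unfolding pauli_vec_def using y x by (rule pauli_mult_entry[OF C])
    ultimately show ?thesis using rel by simp
  qed
  then have "C $$ (y, xor_bits n x ?\<beta>) * ?\<phi> * ?s * (?\<phi> * ?s * parity_sign (symp_quad n u))
      = \<sigma> * (pauli_phase n v ?b * parity_sign (f2_dot n v (qbit n y)) * C $$ (xor_bits n y ?b, x))
        * (?\<phi> * ?s * parity_sign (symp_quad n u))"
    by (rule arg_cong[where f = "\<lambda>z. z * (?\<phi> * ?s * parity_sign (symp_quad n u))"])
  moreover have "C $$ (y, xor_bits n x ?\<beta>) * ?\<phi> * ?s * (?\<phi> * ?s * parity_sign (symp_quad n u))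
      = C $$ (y, xor_bits n x ?\<beta>)"
    by (simp add: pauli_phase_square pauli_phase_square_mult symp_quad_def mult_ac)
  ultimately show ?thesis
    by (simp only: mult_ac)
qed

lemma twin_amplitude_pauli_constraint:
  assumes C: "C \<in> carrier_mat (2 ^ n) (2 ^ n)"
    and rel: "C * pauli_vec n u = \<sigma> \<cdot>\<^sub>m (pauli_vec n v * C)" and \<sigma>: "\<sigma> * \<sigma> = 1"
    and nonzero: "twin_amplitude n C k l i j \<noteq> 0"
  shows "(symp_quad n u \<noteq> symp_form n u (concat_bits n i j))
       = (symp_quad n v \<noteq> symp_form n v (concat_bits n k l))"
proof -
  let ?\<kappa> = "\<sigma> * pauli_phase n v (\<lambda>q. v (n + q)) * pauli_phase n u (\<lambda>q. u (n + q)) * parity_sign (symp_quad n u)"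
  have \<kappa>: "?\<kappa> * ?\<kappa> = parity_sign (f2_dot n v (\<lambda>q. v (n + q))) * parity_sign (f2_dot n u (\<lambda>q. u (n + q)))"
  proof -
    have "?\<kappa> * ?\<kappa> = (\<sigma> * \<sigma>) * (pauli_phase n v (\<lambda>q. v (n + q)) * pauli_phase n v (\<lambda>q. v (n + q)))
        * (pauli_phase n u (\<lambda>q. u (n + q)) * pauli_phase n u (\<lambda>q. u (n + q)))
        * (parity_sign (symp_quad n u) * parity_sign (symp_quad n u))"
      by (simp only: mult_ac)
    then show ?thesis using \<sigma> by (simp add: pauli_phase_square)
  qed
  have "((f2_dot n u (\<lambda>q. u (n + q)) \<noteq> f2_dot n u (qbit n j)) \<noteq> f2_dot n (qbit n i) (\<lambda>q. u (n + q)))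
      = ((f2_dot n v (\<lambda>q. v (n + q)) \<noteq> f2_dot n v (qbit n l)) \<noteq> f2_dot n (qbit n k) (\<lambda>q. v (n + q)))"
    by (rule twin_amplitude_constraint[OF _ \<kappa> nonzero])
      (rule pauli_vec_intertwining_entry[OF C rel]; assumption)
  then show ?thesis
    unfolding symp_quad_def symp_form_concat_bits by argo
qed

lemma walsh_orthogonality:
  assumes y: "y < 2 ^ n" and y': "y' < 2 ^ n"
  shows "(\<Sum>k<2 ^ n. parity_sign (f2_dot n (qbit n k) (qbit n y)) * parity_sign (f2_dot n (qbit n k) (qbit n y')))
       = (if y = y' then 2 ^ n else 0)"
proof (cases "y = y'")
  case False
  then obtain r where r: "r < n" "qbit n y r \<noteq> qbit n y' r" using qbit_eqI[OF y y'] by blast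
  let ?v = "\<lambda>q. qbit n y q \<noteq> qbit n y' q"
  let ?T = "\<Sum>k<2 ^ n. parity_sign (f2_dot n (qbit n k) ?v)"
  have flip: "f2_dot n (qbit n (xor_bits n k (\<lambda>q. q = r))) ?v = (\<not> f2_dot n (qbit n k) ?v)" for k
  proof -
    have "f2_dot n (qbit n (xor_bits n k (\<lambda>q. q = r))) ?v = f2_dot n ?v (qbit n (xor_bits n k (\<lambda>q. q = r)))"
      by (rule f2_dot_commute)
    also have "\<dots> = (f2_dot n ?v (qbit n k) \<noteq> ?v r)"
      using r(1) by (simp only: f2_dot_qbit_xor_bits f2_dot_unit_right)
    also have "f2_dot n ?v (qbit n k) = f2_dot n (qbit n k) ?v"
      by (rule f2_dot_commute)
    finally show ?thesis using r(2) by simp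
  qed
  have "?T = (\<Sum>k<2 ^ n. parity_sign (f2_dot n (qbit n (xor_bits n k (\<lambda>q. q = r))) ?v))"
    by (rule sum_xor_bits_reindex[symmetric])
  also have "\<dots> = (\<Sum>k<2 ^ n. parity_sign (\<not> f2_dot n (qbit n k) ?v))"
    by (simp only: flip)
  also have "\<dots> = - ?T"
    by (simp add: parity_sign_not sum_negf)
  finally have "?T = 0" by simp
  moreover have "parity_sign (f2_dot n (qbit n k) (qbit n y)) * parity_sign (f2_dot n (qbit n k) (qbit n y'))
      = parity_sign (f2_dot n (qbit n k) ?v)" for k
    by (simp only: f2_dot_xor_right parity_sign_xor)
  ultimately show ?thesis
    using False by simp
qed simp

lemma walsh_parseval:
  "(\<Sum>k<2 ^ n. (\<Sum>y<2 ^ n. parity_sign (f2_dot n (qbit n k) (qbit n y)) * F y)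
       * cnj (\<Sum>y<2 ^ n. parity_sign (f2_dot n (qbit n k) (qbit n y)) * F y))
     = 2 ^ n * (\<Sum>y<2 ^ n. F y * cnj (F y))"
proof -
  let ?\<chi> = "\<lambda>k y. parity_sign (f2_dot n (qbit n k) (qbit n y))"
  have "(\<Sum>k<2 ^ n. (\<Sum>y<2 ^ n. ?\<chi> k y * F y) * cnj (\<Sum>y<2 ^ n. ?\<chi> k y * F y))
      = (\<Sum>k<2 ^ n. \<Sum>y<2 ^ n. \<Sum>y'<2 ^ n. (?\<chi> k y * ?\<chi> k y') * (F y * cnj (F y')))"
    by (simp add: sum_product mult_ac)
  also have "\<dots> = (\<Sum>y<2 ^ n. \<Sum>y'<2 ^ n. \<Sum>k<2 ^ n. (?\<chi> k y * ?\<chi> k y') * (F y * cnj (F y')))"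
    by (subst sum.swap) (rule sum.cong[OF refl], rule sum.swap)
  also have "\<dots> = (\<Sum>y<2 ^ n. \<Sum>y'<2 ^ n. if y' = y then 2 ^ n * (F y * cnj (F y')) else 0)"
    by (intro sum.cong refl) (auto simp: walsh_orthogonality simp flip: sum_distrib_right)
  also have "\<dots> = 2 ^ n * (\<Sum>y<2 ^ n. F y * cnj (F y))"
    by (simp add: sum_distrib_left)
  finally show ?thesis .
qed

lemma sum_swap_pairs:
  "(\<Sum>a\<in>A. \<Sum>b\<in>B. \<Sum>c\<in>C. \<Sum>d\<in>D. f a b c d)
     = (\<Sum>c\<in>C. \<Sum>d\<in>D. \<Sum>a\<in>A. \<Sum>b\<in>B. (f a b c d :: 'a::comm_monoid_add))"
proof -
  have "(\<Sum>a\<in>A. \<Sum>b\<in>B. \<Sum>c\<in>C. \<Sum>d\<in>D. f a b c d) = (\<Sum>a\<in>A. \<Sum>c\<in>C. \<Sum>b\<in>B. \<Sum>d\<in>D. f a b c d)"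
    by (rule sum.cong[OF refl], rule sum.swap)
  also have "\<dots> = (\<Sum>a\<in>A. \<Sum>c\<in>C. \<Sum>d\<in>D. \<Sum>b\<in>B. f a b c d)"
    by (rule sum.cong[OF refl], rule sum.cong[OF refl], rule sum.swap)
  also have "\<dots> = (\<Sum>c\<in>C. \<Sum>a\<in>A. \<Sum>d\<in>D. \<Sum>b\<in>B. f a b c d)"
    by (rule sum.swap)
  also have "\<dots> = (\<Sum>c\<in>C. \<Sum>d\<in>D. \<Sum>a\<in>A. \<Sum>b\<in>B. f a b c d)"
    by (rule sum.cong[OF refl], rule sum.swap)
  finally show ?thesis .
qed

lemma unitary_columns_orthonormal:
  assumes "C \<in> carrier_mat N N" "dagger C * C = 1\<^sub>m N" "x < N" "z < N"
  shows "(\<Sum>y<N. cnj (C $$ (y, z)) * C $$ (y, x)) = of_bool (z = x)"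
proof -
  have "dagger C \<in> carrier_mat N N" using assms(1) by (simp add: dagger_def)
  then have "(dagger C * C) $$ (z, x) = (\<Sum>y<N. cnj (C $$ (y, z)) * C $$ (y, x))"
    using assms by (subst index_mult_mat_sum[of _ N N _ N]) (auto simp: dagger_def)
  moreover have "(dagger C * C) $$ (z, x) = of_bool (z = x)"
    using assms(2-4) by simp
  ultimately show ?thesis by metis
qed

text \<open>Q is the image under C \<otimes> C of the vector \<open>\<Sum>\<^sub>x \<plusminus>|x\<rangle>|x \<oplus> j\<rangle>\<close>, whose squared norm is 2^n.\<close>

lemma twin_op_signed_shift_norm:
  fixes i :: nat
  assumes C: "C \<in> carrier_mat (2 ^ n) (2 ^ n)" and CC: "dagger C * C = 1\<^sub>m (2 ^ n)" and j: "j < 2 ^ n"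
  defines "Q y y' \<equiv> \<Sum>x<2 ^ n. parity_sign (f2_dot n (qbit n i) (qbit n x)) * C $$ (y, x) * C $$ (y', xor_bits n x (qbit n j))"
  shows "(\<Sum>y<2 ^ n. \<Sum>y'<2 ^ n. Q y y' * cnj (Q y y')) = 2 ^ n"
proof -
  let ?s = "\<lambda>x. parity_sign (f2_dot n (qbit n i) (qbit n x))"
  let ?G = "\<lambda>y z. cnj (C $$ (y, z))" and ?X = "\<lambda>x. xor_bits n x (qbit n j)"
  have "(\<Sum>y<2 ^ n. \<Sum>y'<2 ^ n. Q y y' * cnj (Q y y'))
      = (\<Sum>y<2 ^ n. \<Sum>y'<2 ^ n. \<Sum>x<2 ^ n. \<Sum>z<2 ^ n.
           (?s x * ?s z) * ((?G y z * C $$ (y, x)) * (?G y' (?X z) * C $$ (y', ?X x))))"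
    unfolding Q_def by (simp add: sum_product mult_ac)
  also have "\<dots> = (\<Sum>x<2 ^ n. \<Sum>z<2 ^ n. \<Sum>y<2 ^ n. \<Sum>y'<2 ^ n.
           (?s x * ?s z) * ((?G y z * C $$ (y, x)) * (?G y' (?X z) * C $$ (y', ?X x))))"
    by (rule sum_swap_pairs)
  also have "\<dots> = (\<Sum>x<2 ^ n. \<Sum>z<2 ^ n. (?s x * ?s z)
      * ((\<Sum>y<2 ^ n. ?G y z * C $$ (y, x)) * (\<Sum>y'<2 ^ n. ?G y' (?X z) * C $$ (y', ?X x))))"
    by (intro sum.cong refl) (simp only: sum_product, simp only: sum_distrib_left)
  also have "\<dots> = (\<Sum>x<(2::nat) ^ n. \<Sum>z<(2::nat) ^ n. of_bool (z = x))"
    by (intro sum.cong refl) (auto simp: unitary_columns_orthonormal[OF C CC] xor_bits_inject)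
  finally show ?thesis by simp
qed

lemma twin_amplitude_norm:
  assumes C: "C \<in> carrier_mat (2 ^ n) (2 ^ n)" and CC: "dagger C * C = 1\<^sub>m (2 ^ n)" and j: "j < 2 ^ n"
  shows "(\<Sum>k<2 ^ n. \<Sum>l<2 ^ n. (cmod (twin_amplitude n C k l i j))\<^sup>2) = 4 ^ n"
proof -
  define H where "H l y = (\<Sum>x<2 ^ n. parity_sign (f2_dot n (qbit n i) (qbit n x))
      * C $$ (y, x) * C $$ (xor_bits n y (qbit n l), xor_bits n x (qbit n j)))" for l y
  define Q where "Q y y' = (\<Sum>x<2 ^ n. parity_sign (f2_dot n (qbit n i) (qbit n x))
      * C $$ (y, x) * C $$ (y', xor_bits n x (qbit n j)))" for y y'
  have G: "twin_amplitude n C k l i j = (\<Sum>y<2 ^ n. parity_sign (f2_dot n (qbit n k) (qbit n y)) * H l y)"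
    for k l by (simp add: twin_amplitude_def H_def sum_distrib_left mult_ac)
  have H: "H l y = Q y (xor_bits n l (qbit n y))" for l y
    by (simp add: H_def Q_def xor_bits_qbit_commute)
  have "complex_of_real (\<Sum>k<2 ^ n. \<Sum>l<2 ^ n. (cmod (twin_amplitude n C k l i j))\<^sup>2)
      = (\<Sum>k<2 ^ n. \<Sum>l<2 ^ n. twin_amplitude n C k l i j * cnj (twin_amplitude n C k l i j))"
    by (simp only: of_real_sum complex_norm_square)
  also have "\<dots> = (\<Sum>l<2 ^ n. \<Sum>k<2 ^ n. twin_amplitude n C k l i j * cnj (twin_amplitude n C k l i j))"
    by (rule sum.swap)
  also have "\<dots> = (\<Sum>l<2 ^ n. 2 ^ n * (\<Sum>y<2 ^ n. H l y * cnj (H l y)))"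
    by (simp only: G walsh_parseval)
  also have "\<dots> = 2 ^ n * (\<Sum>l<2 ^ n. \<Sum>y<2 ^ n. H l y * cnj (H l y))"
    by (rule sum_distrib_left[symmetric])
  also have "\<dots> = 2 ^ n * (\<Sum>y<2 ^ n. \<Sum>l<2 ^ n. H l y * cnj (H l y))"
    by (rule arg_cong[where f = "\<lambda>z. 2 ^ n * z"], rule sum.swap)
  also have "\<dots> = 2 ^ n * (\<Sum>y<2 ^ n. \<Sum>l<2 ^ n. Q y (xor_bits n l (qbit n y)) * cnj (Q y (xor_bits n l (qbit n y))))"
    by (simp only: H)
  also have "\<dots> = 2 ^ n * (\<Sum>y<2 ^ n. \<Sum>y'<2 ^ n. Q y y' * cnj (Q y y'))"
    by (simp only: sum_xor_bits_reindex[of "\<lambda>y'. Q _ y' * cnj (Q _ y')"])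
  also have "\<dots> = 2 ^ n * 2 ^ n"
    unfolding Q_def by (simp only: twin_op_signed_shift_norm[OF C CC j])
  also have "\<dots> = complex_of_real (4 ^ n)"
    by (simp add: power_mult_distrib[symmetric])
  finally show ?thesis by (simp only: of_real_eq_iff)
qed

section \<open>The Twin-C circuit\<close>

lemma pair_index_less: "(X::nat) < 2 ^ n \<Longrightarrow> Y < 2 ^ n \<Longrightarrow> X * 2 ^ n + Y < 2 ^ (2 * n)"
proof -
  assume "X < 2 ^ n" "Y < 2 ^ n"
  then have "X * 2 ^ n + Y < (X + 1) * 2 ^ n" by simp
  also have "\<dots> \<le> 2 ^ n * 2 ^ n" using \<open>X < 2 ^ n\<close> by (intro mult_right_mono) auto
  finally show ?thesis by (simp add: power_add[symmetric] mult_2)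
qed

lemma pair_index_div_less: "(z::nat) < 2 ^ (2 * n) \<Longrightarrow> z div 2 ^ n < 2 ^ n"
  by (simp add: less_mult_imp_div_less mult_2 power_add)

lemma sum_pair_index:
  "(\<Sum>z<2 ^ (2 * n). F z) = (\<Sum>X<(2::nat) ^ n. \<Sum>Y<2 ^ n. (F (X * 2 ^ n + Y) :: 'a::comm_monoid_add))"
proof -
  have "(\<Sum>X<2 ^ n. \<Sum>Y<2 ^ n. F (X * 2 ^ n + Y)) = (\<Sum>(X, Y)\<in>{..<2 ^ n} \<times> {..<2 ^ n}. F (X * 2 ^ n + Y))"
    by (rule sum.cartesian_product)
  also have "\<dots> = (\<Sum>z<2 ^ (2 * n). F z)"
    by (rule sum.reindex_bij_witness[where i = "\<lambda>z. (z div 2 ^ n, z mod 2 ^ n)" and j = "\<lambda>(X, Y). X * 2 ^ n + Y"])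
      (auto simp: pair_index_less pair_index_div_less div_mult_mod_eq)
  finally show ?thesis by simp
qed

lemma qbit_pair_index:
  assumes "Y < 2 ^ n" "q < 2 * n"
  shows "qbit (2 * n) (X * 2 ^ n + Y) q = (if q < n then qbit n X q else qbit n Y (q - n))"
proof (cases "q < n")
  case True
  have "2 * n - 1 - q = n + (n - 1 - q)" using True by simp
  then have "qbit (2 * n) (X * 2 ^ n + Y) q = bit ((X * 2 ^ n + Y) div 2 ^ n) (n - 1 - q)"
    by (simp only: qbit_iff_bit bit_iff_odd div_mult2_eq power_add)
  then show ?thesis
    using True assms(1) by (simp add: qbit_iff_bit)
next
  case False
  then have "2 * n - 1 - q = n - 1 - (q - n)" "n - 1 - (q - n) < n" using assms(2) by auto
  moreover have "bit (X * 2 ^ n + Y) p = bit Y p" if "p < n" for p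
  proof -
    have "bit ((X * 2 ^ n + Y) mod 2 ^ n) p = (p < n \<and> bit (X * 2 ^ n + Y) p)"
      by (simp flip: take_bit_eq_mod add: bit_take_bit_iff)
    then show ?thesis using that assms(1) by simp
  qed
  ultimately show ?thesis
    using False by (simp add: qbit_iff_bit)
qed

lemma prod_lessThan_add: "(\<Prod>r<(n::nat) + m. F r) = (\<Prod>r<n. F r) * (\<Prod>r<m. (F (n + r) :: 'a::comm_monoid_mult))"
  by (induction m) (auto simp: mult_ac)

lemma H2_entry: "H2 $$ (of_bool p, of_bool q) = parity_sign (p \<and> q) / sqrt 2"
  by (cases p; cases q) (simp_all add: H2_def mat_of_rows_list_def)

lemma I2_entry: "I2 $$ (of_bool p, of_bool q) = of_bool (p = q)"
  by (cases p; cases q) (simp_all add: I2_def mat_of_rows_list_def)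

lemma hadamard_A_carrier [simp]: "hadamard_A n \<in> carrier_mat (2 ^ (2 * n)) (2 ^ (2 * n))"
  by (simp add: hadamard_A_def)

lemma hadamard_A_entry:
  assumes "X < 2 ^ n" "Y < 2 ^ n" "X' < 2 ^ n" "Y' < 2 ^ n"
  shows "hadamard_A n $$ (X * 2 ^ n + Y, X' * 2 ^ n + Y')
       = (if Y = Y' then parity_sign (f2_dot n (qbit n X) (qbit n X')) / sqrt 2 ^ n else 0)"
proof -
  let ?F = "\<lambda>r. (if r < n then H2 else I2) $$
      (of_bool (qbit (2 * n) (X * 2 ^ n + Y) r), of_bool (qbit (2 * n) (X' * 2 ^ n + Y') r))"
  have "hadamard_A n $$ (X * 2 ^ n + Y, X' * 2 ^ n + Y') = (\<Prod>r<2 * n. ?F r)"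
    unfolding hadamard_A_def using assms by (simp add: tensor_ops_entry pair_index_less)
  also have "\<dots> = (\<Prod>r<n + n. ?F r)"
    by (simp only: mult_2)
  also have "\<dots> = (\<Prod>r<n. ?F r) * (\<Prod>r<n. ?F (n + r))"
    by (rule prod_lessThan_add)
  also have "(\<Prod>r<n. ?F r) = (\<Prod>r<n. parity_sign (qbit n X r \<and> qbit n X' r) / sqrt 2)"
    using assms by (intro prod.cong refl) (simp add: qbit_pair_index H2_entry)
  also have "\<dots> = parity_sign (f2_dot n (qbit n X) (qbit n X')) / sqrt 2 ^ n"
    by (simp add: prod_dividef parity_sign_f2_dot)
  also have "(\<Prod>r<n. ?F (n + r)) = (\<Prod>r<n. of_bool (qbit n Y r = qbit n Y' r))"
    using assms by (intro prod.cong refl) (simp add: qbit_pair_index I2_entry)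
  also have "\<dots> = of_bool (Y = Y')"
    using qbit_eqI[of Y n Y'] assms(2,4) by (auto simp: prod_if_zero)
  finally show ?thesis by simp
qed

definition perm_mat :: "nat \<Rightarrow> (nat \<Rightarrow> nat) \<Rightarrow> complex mat" where
  "perm_mat N g = mat (2 ^ N) (2 ^ N) (\<lambda>(y, x). of_bool (y = g x))"

lemma perm_mat_carrier [simp]: "perm_mat N g \<in> carrier_mat (2 ^ N) (2 ^ N)"
  by (simp add: perm_mat_def)

lemma mult_perm_mat_entry:
  assumes M: "M \<in> carrier_mat m (2 ^ N)" and "y < m" "x < 2 ^ N" "g x < 2 ^ N"
  shows "(M * perm_mat N g) $$ (y, x) = M $$ (y, g x)"
proof -
  have "(M * perm_mat N g) $$ (y, x) = (\<Sum>z<2 ^ N. M $$ (y, z) * perm_mat N g $$ (z, x))"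
    using assms by (intro index_mult_mat_sum[OF M]) auto
  also have "\<dots> = (\<Sum>z<2 ^ N. if z = g x then M $$ (y, z) else 0)"
    using assms by (intro sum.cong) (auto simp: perm_mat_def)
  finally show ?thesis using assms by simp
qed

lemma perm_mat_mult_entry:
  assumes M: "M \<in> carrier_mat (2 ^ N) m" and "y < 2 ^ N" "x < m"
    and g: "\<And>z. z < 2 ^ N \<Longrightarrow> g z < 2 ^ N" "\<And>z. z < 2 ^ N \<Longrightarrow> g (g z) = z"
  shows "(perm_mat N g * M) $$ (y, x) = M $$ (g y, x)"
proof -
  have "(perm_mat N g * M) $$ (y, x) = (\<Sum>z<2 ^ N. perm_mat N g $$ (y, z) * M $$ (z, x))"
    using assms by (intro index_mult_mat_sum[OF _ M]) auto
  also have "\<dots> = (\<Sum>z<2 ^ N. if z = g y then M $$ (z, x) else 0)"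
    using assms by (intro sum.cong) (auto simp: perm_mat_def)
  finally show ?thesis using assms by simp
qed

lemma perm_mat_mult:
  assumes "\<And>x. x < 2 ^ N \<Longrightarrow> g' x < 2 ^ N"
  shows "perm_mat N g * perm_mat N g' = perm_mat N (g \<circ> g')"
proof (rule eq_matI)
  fix y x assume "y < dim_row (perm_mat N (g \<circ> g'))" "x < dim_col (perm_mat N (g \<circ> g'))"
  then have y: "y < 2 ^ N" and x: "x < 2 ^ N" by (simp_all add: perm_mat_def)
  then show "(perm_mat N g * perm_mat N g') $$ (y, x) = perm_mat N (g \<circ> g') $$ (y, x)"
    using mult_perm_mat_entry[of "perm_mat N g" "2 ^ N" N y x g'] assms
    by (simp add: perm_mat_def)
qed (simp_all add: perm_mat_def)

lemma cnot_eq_perm_mat: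
  "cnot N c t = perm_mat N (\<lambda>x. nat_of_bits N (\<lambda>q. if q = t then qbit N x t \<noteq> qbit N x c else qbit N x q))"
  unfolding cnot_def perm_mat_def by (rule eq_matI) (auto simp: eq_nat_of_bits_iff)

definition cnot_layer_map :: "nat \<Rightarrow> nat set \<Rightarrow> nat \<Rightarrow> nat" where
  "cnot_layer_map n R x = nat_of_bits (2 * n) (\<lambda>q.
     if n \<le> q \<and> q - n \<in> R then qbit (2 * n) x q \<noteq> qbit (2 * n) x (q - n) else qbit (2 * n) x q)"

lemma cnot_layer_map_less [simp]: "cnot_layer_map n R x < 2 ^ (2 * n)"
  by (simp add: cnot_layer_map_def nat_of_bits_less)

lemma foldr_cnot_eq_perm_mat:
  assumes "distinct rs" "set rs \<subseteq> {..<n}"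
  shows "foldr (\<lambda>r M. cnot (2 * n) r (n + r) * M) rs (1\<^sub>m (2 ^ (2 * n)))
       = perm_mat (2 * n) (cnot_layer_map n (set rs))"
  using assms
proof (induction rs)
  case Nil
  have "cnot_layer_map n {} x = x" if "x < 2 ^ (2 * n)" for x
    using that by (simp add: cnot_layer_map_def nat_of_bits_qbit)
  then show ?case
    by (intro eq_matI) (auto simp: perm_mat_def)
next
  case (Cons r rs)
  have comp: "(\<lambda>x. nat_of_bits (2 * n) (\<lambda>q. if q = n + r then qbit (2 * n) x (n + r) \<noteq> qbit (2 * n) x r
      else qbit (2 * n) x q)) \<circ> cnot_layer_map n (set rs) = cnot_layer_map n (set (r # rs))"
  proof
    fix x
    show "((\<lambda>x. nat_of_bits (2 * n) (\<lambda>q. if q = n + r then qbit (2 * n) x (n + r) \<noteq> qbit (2 * n) x r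
        else qbit (2 * n) x q)) \<circ> cnot_layer_map n (set rs)) x = cnot_layer_map n (set (r # rs)) x"
      using Cons.prems unfolding cnot_layer_map_def comp_def
      by (intro nat_of_bits_cong) (auto simp: qbit_nat_of_bits)
  qed
  have "foldr (\<lambda>r M. cnot (2 * n) r (n + r) * M) (r # rs) (1\<^sub>m (2 ^ (2 * n)))
      = cnot (2 * n) r (n + r) * perm_mat (2 * n) (cnot_layer_map n (set rs))"
    using Cons by simp
  also have "\<dots> = perm_mat (2 * n) (cnot_layer_map n (set (r # rs)))"
    unfolding cnot_eq_perm_mat by (subst perm_mat_mult) (simp_all only: cnot_layer_map_less comp)
  finally show ?case .
qed

lemma transversal_cnot_eq_perm_mat: "transversal_cnot n = perm_mat (2 * n) (cnot_layer_map n {..<n})"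
  unfolding transversal_cnot_def by (subst foldr_cnot_eq_perm_mat) (auto simp: atLeast0LessThan)

lemma cnot_layer_map_pair_index:
  assumes "X < 2 ^ n" "Y < 2 ^ n"
  shows "cnot_layer_map n {..<n} (X * 2 ^ n + Y) = X * 2 ^ n + xor_bits n Y (qbit n X)"
proof (rule qbit_eqI[where n = "2 * n"])
  fix q assume "q < 2 * n"
  then show "qbit (2 * n) (cnot_layer_map n {..<n} (X * 2 ^ n + Y)) q
      = qbit (2 * n) (X * 2 ^ n + xor_bits n Y (qbit n X)) q"
    using assms by (auto simp: cnot_layer_map_def qbit_nat_of_bits qbit_pair_index)
qed (use assms in \<open>simp_all add: cnot_layer_map_def nat_of_bits_less pair_index_less\<close>)

lemma cnot_layer_map_involution:
  assumes "x < 2 ^ (2 * n)"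
  shows "cnot_layer_map n R (cnot_layer_map n R x) = x"
proof (rule qbit_eqI[where n = "2 * n"])
  fix q assume "q < 2 * n"
  then show "qbit (2 * n) (cnot_layer_map n R (cnot_layer_map n R x)) q = qbit (2 * n) x q"
    by (auto simp: cnot_layer_map_def qbit_nat_of_bits)
qed (simp_all add: assms)

lemma index_mult_mat_sum3:
  assumes "A \<in> carrier_mat m p" "W \<in> carrier_mat p q" "B \<in> carrier_mat q r" "i < m" "j < r"
  shows "(A * W * B) $$ (i, j) = (\<Sum>u<p. \<Sum>w<q. A $$ (i, u) * W $$ (u, w) * B $$ (w, j))"
proof -
  have "(A * W * B) $$ (i, j) = (\<Sum>w<q. (A * W) $$ (i, w) * B $$ (w, j))"
    using assms by (intro index_mult_mat_sum) auto
  also have "\<dots> = (\<Sum>w<q. \<Sum>u<p. A $$ (i, u) * W $$ (u, w) * B $$ (w, j))"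
    by (intro sum.cong refl, subst index_mult_mat_sum[OF assms(1,2,4)]) (simp_all add: sum_distrib_right)
  finally show ?thesis by (simp only: sum.swap[of _ "{..<q}"])
qed

lemma sum_delta_pair:
  assumes "a < N" "b < (N::nat)"
  shows "(\<Sum>y<N. \<Sum>z<N. if y = a \<and> z = b then F y z else 0) = (F a b :: 'a::comm_monoid_add)"
proof -
  have "(\<Sum>z<N. if y = a \<and> z = b then F y z else 0) = (if y = a then F y b else 0)" for y
    using assms(2) by (cases "y = a") (simp_all add: sum.delta)
  then show ?thesis using assms(1) by (simp add: sum.delta)
qed

lemma hadamard_cnot_entry:
  assumes "k < 2 ^ n" "l < 2 ^ n" "X < 2 ^ n" "Y < 2 ^ n"
  shows "(hadamard_A n * transversal_cnot n) $$ (k * 2 ^ n + l, X * 2 ^ n + Y)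
       = (if Y = xor_bits n l (qbit n X) then parity_sign (f2_dot n (qbit n k) (qbit n X)) / sqrt 2 ^ n else 0)"
  using assms
  by (simp add: transversal_cnot_eq_perm_mat mult_perm_mat_entry[OF hadamard_A_carrier]
      pair_index_less cnot_layer_map_pair_index hadamard_A_entry xor_bits_eq_iff)

lemma cnot_hadamard_entry:
  assumes "X < 2 ^ n" "Y < 2 ^ n" "i < 2 ^ n" "j < 2 ^ n"
  shows "(transversal_cnot n * hadamard_A n) $$ (X * 2 ^ n + Y, i * 2 ^ n + j)
       = (if Y = xor_bits n j (qbit n X) then parity_sign (f2_dot n (qbit n X) (qbit n i)) / sqrt 2 ^ n else 0)"
  using assms
  by (simp add: transversal_cnot_eq_perm_mat perm_mat_mult_entry[OF hadamard_A_carrier]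
      cnot_layer_map_involution pair_index_less cnot_layer_map_pair_index hadamard_A_entry
      xor_bits_eq_iff eq_commute[of "xor_bits n Y (qbit n X)" j])

lemma twin_op_carrier [simp]: "twin_op n C \<in> carrier_mat (2 ^ (2 * n)) (2 ^ (2 * n))"
  by (simp add: twin_op_def)

lemma twin_op_entry:
  "X < 2 ^ n \<Longrightarrow> Y < 2 ^ n \<Longrightarrow> X' < 2 ^ n \<Longrightarrow> Y' < 2 ^ n \<Longrightarrow>
     twin_op n C $$ (X * 2 ^ n + Y, X' * 2 ^ n + Y') = C $$ (X, X') * C $$ (Y, Y')"
  by (simp add: twin_op_def pair_index_less)

lemma twin_circuit_entry:
  assumes "k < 2 ^ n" "l < 2 ^ n" "i < 2 ^ n" "j < 2 ^ n"
  shows "twin_circuit n C $$ (k * 2 ^ n + l, i * 2 ^ n + j) = twin_amplitude n C k l i j / 2 ^ n"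
proof -
  let ?N = "2 ^ (2 * n) :: nat"
  let ?A = "hadamard_A n * transversal_cnot n" and ?B = "transversal_cnot n * hadamard_A n"
  have T: "transversal_cnot n \<in> carrier_mat ?N ?N" by (simp add: transversal_cnot_eq_perm_mat)
  have A: "?A \<in> carrier_mat ?N ?N" and B: "?B \<in> carrier_mat ?N ?N"
    using T by (auto intro: mult_carrier_mat[OF hadamard_A_carrier] mult_carrier_mat[OF T])
  have "twin_circuit n C = ?A * twin_op n C * ?B"
    unfolding twin_circuit_def
    by (rule assoc_mult_mat[OF mult_carrier_mat[OF A twin_op_carrier] T hadamard_A_carrier])
  then have "twin_circuit n C $$ (k * 2 ^ n + l, i * 2 ^ n + j)
      = (\<Sum>X'<2 ^ n. \<Sum>Y'<2 ^ n. \<Sum>X<2 ^ n. \<Sum>Y<2 ^ n.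
           ?A $$ (k * 2 ^ n + l, X' * 2 ^ n + Y') * twin_op n C $$ (X' * 2 ^ n + Y', X * 2 ^ n + Y)
           * ?B $$ (X * 2 ^ n + Y, i * 2 ^ n + j))"
    using assms A B by (simp add: index_mult_mat_sum3[OF A twin_op_carrier B] pair_index_less sum_pair_index)
  also have "\<dots> = (\<Sum>X'<2 ^ n. \<Sum>X<2 ^ n. \<Sum>Y'<2 ^ n. \<Sum>Y<2 ^ n.
           ?A $$ (k * 2 ^ n + l, X' * 2 ^ n + Y') * twin_op n C $$ (X' * 2 ^ n + Y', X * 2 ^ n + Y)
           * ?B $$ (X * 2 ^ n + Y, i * 2 ^ n + j))"
    by (rule sum.cong[OF refl], rule sum.swap)
  also have "\<dots> = (\<Sum>X'<2 ^ n. \<Sum>X<2 ^ n. \<Sum>Y'<2 ^ n. \<Sum>Y<2 ^ n.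
      if Y' = xor_bits n l (qbit n X') \<and> Y = xor_bits n j (qbit n X)
      then parity_sign (f2_dot n (qbit n k) (qbit n X')) * parity_sign (f2_dot n (qbit n X) (qbit n i))
        * C $$ (X', X) * C $$ (Y', Y) / (sqrt 2 ^ n * sqrt 2 ^ n)
      else 0)"
    using assms by (intro sum.cong refl) (simp add: hadamard_cnot_entry cnot_hadamard_entry twin_op_entry)
  also have "\<dots> = (\<Sum>X'<2 ^ n. \<Sum>X<2 ^ n.
      parity_sign (f2_dot n (qbit n k) (qbit n X')) * parity_sign (f2_dot n (qbit n X) (qbit n i))
        * C $$ (X', X) * C $$ (xor_bits n l (qbit n X'), xor_bits n j (qbit n X)) / (sqrt 2 ^ n * sqrt 2 ^ n))"
    by (intro sum.cong refl sum_delta_pair) simp_all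
  also have "\<dots> = twin_amplitude n C k l i j / 2 ^ n"
    by (simp add: twin_amplitude_def sum_divide_distrib power_mult_distrib[symmetric]
        xor_bits_qbit_commute f2_dot_commute[of n "qbit n i"] mult_ac)
  finally show ?thesis .
qed

lemma twin_prob_eq:
  assumes "i < 2 ^ n" "j < 2 ^ n" "k < 2 ^ n" "l < 2 ^ n"
  shows "twin_prob n C i j k l = (cmod (twin_amplitude n C k l i j))\<^sup>2 / 4 ^ n"
proof -
  have "(2::real) ^ (n * 2) = 4 ^ n"
    by (subst mult.commute) (simp add: power_mult)
  then show ?thesis
    using assms
    by (simp add: twin_prob_def twin_circuit_entry norm_divide norm_power power_divide
        flip: power_mult power_mult_distrib)
qed

section \<open>The tableau of a Clifford unitary\<close>

lemma concat_bits_inject: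
  assumes "\<forall>r<2 * n. concat_bits n x y r = concat_bits n x' y' r"
    and "x < 2 ^ n" "y < 2 ^ n" "x' < 2 ^ n" "y' < 2 ^ n"
  shows "x = x' \<and> y = y'"
proof -
  have "qbit n x r = qbit n x' r" "qbit n y r = qbit n y' r" if "r < n" for r
    using assms(1)[rule_format, of r] assms(1)[rule_format, of "n + r"] that
    by (simp_all add: concat_bits_def)
  then show ?thesis
    using assms(2-5) by (auto intro: qbit_eqI)
qed

locale clifford_tableau =
  fixes n :: nat and C :: "complex mat"
    and a b c d :: "nat \<Rightarrow> nat \<Rightarrow> bool" and f h :: "nat \<Rightarrow> bool"
  assumes clifford: "C \<in> clifford_group n"
    and conj_Z: "\<And>i. i < n \<Longrightarrow> C * Zop n i * dagger C = (if f i then -1 else 1) \<cdot>\<^sub>m pauli n (a i) (b i)"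
    and conj_X: "\<And>i. i < n \<Longrightarrow> C * Xop n i * dagger C = (if h i then -1 else 1) \<cdot>\<^sub>m pauli n (c i) (d i)"
begin

abbreviation S :: "nat \<Rightarrow> nat \<Rightarrow> bool" where
  "S \<equiv> symp_S n a b c d"

lemma C_carrier: "C \<in> carrier_mat (2 ^ n) (2 ^ n)"
  using clifford by (simp add: clifford_group_def unitary_mat_def)

lemma dagger_C_mult_C: "dagger C * C = 1\<^sub>m (2 ^ n)"
proof -
  have "dagger C \<in> carrier_mat (2 ^ n) (2 ^ n)" using C_carrier by (simp add: dagger_def)
  moreover have "C * dagger C = 1\<^sub>m (2 ^ n)" using clifford by (simp add: clifford_group_def unitary_mat_def)
  ultimately show ?thesis by (rule mat_mult_left_right_inverse[OF C_carrier])
qed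

lemma conj_unit_vector:
  assumes "s < 2 * n"
  shows "C * pauli_vec n (\<lambda>r. r = s) * dagger C
       = parity_sign (if s < n then f s else h (s - n)) \<cdot>\<^sub>m pauli_vec n (\<lambda>r. S r s)"
proof (cases "s < n")
  case True
  have "pauli_vec n (\<lambda>r. r = s) = Zop n s"
    unfolding pauli_vec_def Zop_eq_pauli using True by (intro pauli_cong) auto
  moreover have "pauli_vec n (\<lambda>r. S r s) = pauli n (a s) (b s)"
    unfolding pauli_vec_def using True by (intro pauli_cong) (auto simp: symp_S_def)
  ultimately show ?thesis
    using conj_Z[OF True] True by (simp add: parity_sign_def)
next
  case False
  then have s: "s - n < n" using assms by simp
  have "pauli_vec n (\<lambda>r. r = s) = Xop n (s - n)"
    unfolding pauli_vec_def Xop_eq_pauli using False by (intro pauli_cong) auto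
  moreover have "pauli_vec n (\<lambda>r. S r s) = pauli n (c (s - n)) (d (s - n))"
    unfolding pauli_vec_def using False by (intro pauli_cong) (auto simp: symp_S_def)
  ultimately show ?thesis
    using conj_X[OF s] False by (simp add: parity_sign_def)
qed

lemma symplectic_S: "symplectic n S"
  unfolding symplectic_def
proof (intro allI impI)
  fix s t assume s: "s < 2 * n" and t: "t < 2 * n"
  have "symp_form n (\<lambda>r. S r s) (\<lambda>r. S r t) = symp_form n (\<lambda>r. r = s) (\<lambda>r. r = t)"
    by (rule unitary_conj_symp_form[OF C_carrier dagger_C_mult_C conj_unit_vector[OF s] conj_unit_vector[OF t]])
      simp
  also have "\<dots> = (t = swap_halves n s)"
    using s by (auto simp: symp_form_unit_left)
  finally show "symp_form n (\<lambda>r. S r s) (\<lambda>r. S r t) = (t = swap_halves n s)" .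
qed

lemma twin_amplitude_nonzero_imp_outcome:
  assumes "twin_amplitude n C k l i j \<noteq> 0" "t < 2 * n"
  shows "concat_bits n k l t
       = (f2_mulv (2 * n) S (concat_bits n i j) t
          \<noteq> f2_mulv (2 * n) S (\<lambda>s. symp_quad n (\<lambda>r. S r (swap_halves n s))) t)"
proof (rule symplectic_solve[OF symplectic_S _ assms(2)])
  fix s assume s: "s < 2 * n"
  have "C * pauli_vec n (\<lambda>r. r = s)
      = parity_sign (if s < n then f s else h (s - n)) \<cdot>\<^sub>m (pauli_vec n (\<lambda>r. S r s) * C)"
    by (rule conj_eq_smult_imp_mult_eq[OF C_carrier dagger_C_mult_C _ _ conj_unit_vector[OF s]]) simp_all
  from twin_amplitude_pauli_constraint[OF C_carrier this _ assms(1)]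
  have "(symp_quad n (\<lambda>r. r = s) \<noteq> symp_form n (\<lambda>r. r = s) (concat_bits n i j))
      = (symp_quad n (\<lambda>r. S r s) \<noteq> symp_form n (\<lambda>r. S r s) (concat_bits n k l))"
    by simp
  then show "concat_bits n i j (swap_halves n s)
      = (symp_quad n (\<lambda>r. S r s) \<noteq> symp_form n (\<lambda>r. S r s) (concat_bits n k l))"
    using s by (simp add: symp_form_unit_left symp_quad_unit)
qed

abbreviation offset :: "nat \<Rightarrow> bool" where
  "offset \<equiv> f2_mulv (2 * n) S (\<lambda>s. symp_quad n (\<lambda>r. S r (swap_halves n s)))"

lemma twin_prob_formula:
  assumes "i < 2 ^ n" "j < 2 ^ n" "k < 2 ^ n" "l < 2 ^ n"
  shows "twin_prob n C i j k l =
    (if \<forall>r<2 * n. concat_bits n k l r = (f2_mulv (2 * n) S (concat_bits n i j) r \<noteq> offset r) then 1 else 0)"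
proof -
  define measured where "measured k l \<longleftrightarrow>
    (\<forall>r<2 * n. concat_bits n k l r = (f2_mulv (2 * n) S (concat_bits n i j) r \<noteq> offset r))" for k l
  have measured_unique: "k' = k \<and> l' = l"
    if "measured k l" "measured k' l'" "k' < 2 ^ n" "l' < 2 ^ n" for k' l'
    using that assms(3,4) by (intro concat_bits_inject) (auto simp: measured_def)
  have measured_if_nonzero: "measured k' l'" if "twin_amplitude n C k' l' i j \<noteq> 0" for k' l'
    using twin_amplitude_nonzero_imp_outcome[OF that] by (simp add: measured_def)
  show ?thesis
  proof (cases "measured k l")
    case True
    have "(\<Sum>k'<2 ^ n. \<Sum>l'<2 ^ n. (cmod (twin_amplitude n C k' l' i j))\<^sup>2)
        = (\<Sum>k'<2 ^ n. \<Sum>l'<2 ^ n. if k' = k \<and> l' = l then (cmod (twin_amplitude n C k' l' i j))\<^sup>2 else 0)"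
      using measured_unique[OF True] measured_if_nonzero by (intro sum.cong refl) fastforce
    also have "\<dots> = (cmod (twin_amplitude n C k l i j))\<^sup>2"
      using assms(3,4) by (rule sum_delta_pair)
    finally have "(cmod (twin_amplitude n C k l i j))\<^sup>2 = 4 ^ n"
      using twin_amplitude_norm[OF C_carrier dagger_C_mult_C assms(2)] by simp
    then show ?thesis
      using True assms by (simp add: twin_prob_eq measured_def)
  next
    case False
    then have "twin_amplitude n C k l i j = 0" using measured_if_nonzero by blast
    then show ?thesis
      using False assms by (simp add: twin_prob_eq measured_def)
  qed
qed

end

theorem lemma1:
  fixes n :: nat and C :: "complex mat"
    and a b c d :: "nat \<Rightarrow> nat \<Rightarrow> bool" and f h :: "nat \<Rightarrow> bool"
  assumes "n \<ge> 1"
    and "C \<in> clifford_group n"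
    and "\<And>i. i < n \<Longrightarrow> C * Zop n i * dagger C = (if f i then -1 else 1) \<cdot>\<^sub>m pauli n (a i) (b i)"
    and "\<And>i. i < n \<Longrightarrow> C * Xop n i * dagger C = (if h i then -1 else 1) \<cdot>\<^sub>m pauli n (c i) (d i)"
  shows "\<exists>F0 :: nat \<Rightarrow> bool. \<forall>i<2 ^ n. \<forall>j<2 ^ n. \<forall>k<2 ^ n. \<forall>l<2 ^ n.
           twin_prob n C i j k l =
             (if \<forall>r<2 * n. concat_bits n k l r =
                   (f2_mulv (2 * n) (symp_S n a b c d) (concat_bits n i j) r \<noteq> F0 r)
              then 1 else 0)"
proof -
  interpret clifford_tableau n C a b c d f h
    using assms(2-4) by unfold_locales
  show ?thesis
    using twin_prob_formula by blast
qed

end
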